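(* Let $\Gamma$ be a countable discrete group with a free presentation $1\to R\to F\xrightarrow{q}\Gamma\to1$, $\bar a=q(a)$, and let $\varphi:H_2(\Gamma,\mathbb{Z})^{Hopf}=\frac{R\cap[F,F]}{[R,F]}\to H_2(\Gamma,\mathbb{Z})$ be the canonical isomorphism. Let $[r]\in H_2(\Gamma,\mathbb{Z})^{Hopf}$ be represented by $r=\prod_{i=1}^g[a_i,b_i]$ with $a_i,b_i\in F$ and $\prod_{i=1}^g[\bar a_i,\bar b_i]=1$, and let $\varphi([r])$ be represented by a bar-resolution $2$-cycle $\varphi(r)=\sum_{j=1}^mk_j[x_j|y_j]$. Then there exist a finite set $S\subset\Gamma$ and $\delta>0$ such that for every $(S,\delta)$-representation $\rho:\Gamma\to U(k)$, $$\frac{1}{2\pi i}\mathrm{Tr}\log\Big(\prod_{i=1}^g[\rho(\bar a_i),\rho(\bar b_i)]\Big)=\frac{1}{2\pi i}\sum_{j=1}^mk_j\mathrm{Tr}\big(\log(\rho(x_j)\rho(y_j)\rho(x_jy_j)^{-1})\big).$$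
   Context: An $(S,\delta)$-representation is a unital map $\rho:\Gamma\to U(k)$ with $\|\rho(st)-\rho(s)\rho(t)\|<\delta$ for all $s,t\in S$. $[x,y]=xyx^{-1}y^{-1}$. $\log$ is the power series centered at $1$. $H_2(\Gamma,\mathbb{Z})$ is computed by the inhomogeneous bar complex with $\partial[a|b]=[a]-[ab]+[b]$ and $\partial[a|b|c]=[b|c]-[ab|c]+[a|bc]-[a|b]$; $\varphi$ is the standard isomorphism between Hopf's description of $H_2$ and bar-resolution homology. *)

theory Defs
  imports "HOL-Algebra.Group" "HOL-Library.Countable_Set" "Jordan_Normal_Form.Matrix"
begin

definition mtrace :: "complex mat \<Rightarrow> complex" where
  "mtrace A = (\<Sum>i<dim_row A. A $$ (i,i))"

definition madj :: "complex mat \<Rightarrow> complex mat" where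
  "madj A = mat (dim_col A) (dim_row A) (\<lambda>(i,j). cnj (A $$ (j,i)))"

definition unitary_mat :: "nat \<Rightarrow> complex mat \<Rightarrow> bool" where
  "unitary_mat k U \<longleftrightarrow> U \<in> carrier_mat k k \<and> madj U * U = 1\<^sub>m k \<and> U * madj U = 1\<^sub>m k"

definition vnorm :: "complex vec \<Rightarrow> real" where
  "vnorm v = sqrt (\<Sum>i<dim_vec v. (cmod (v $ i))\<^sup>2)"

definition opnorm :: "complex mat \<Rightarrow> real" where
  "opnorm A = Sup {vnorm (A *\<^sub>v v) | v. v \<in> carrier_vec (dim_col A) \<and> vnorm v \<le> 1}"

definition mlog :: "complex mat \<Rightarrow> complex mat" where
  "mlog A = mat (dim_row A) (dim_col A)
     (\<lambda>(i,j). \<Sum>n. ((-1) ^ n / of_nat (Suc n)) * (((A - 1\<^sub>m (dim_row A)) ^\<^sub>m (Suc n)) $$ (i,j)))"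

definition mcomm :: "complex mat \<Rightarrow> complex mat \<Rightarrow> complex mat" where
  "mcomm X Y = X * Y * madj X * madj Y"

fun mcomm_prod :: "nat \<Rightarrow> ('g \<Rightarrow> complex mat) \<Rightarrow> (nat \<Rightarrow> 'g) \<Rightarrow> (nat \<Rightarrow> 'g) \<Rightarrow> nat \<Rightarrow> complex mat" where
  "mcomm_prod k \<rho> a b 0 = 1\<^sub>m k"
| "mcomm_prod k \<rho> a b (Suc i) = mcomm_prod k \<rho> a b i * mcomm (\<rho> (a i)) (\<rho> (b i))"

definition gcomm :: "('g,'c) monoid_scheme \<Rightarrow> 'g \<Rightarrow> 'g \<Rightarrow> 'g" where
  "gcomm G x y = x \<otimes>\<^bsub>G\<^esub> y \<otimes>\<^bsub>G\<^esub> inv\<^bsub>G\<^esub> x \<otimes>\<^bsub>G\<^esub> inv\<^bsub>G\<^esub> y"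

fun gcomm_prod :: "('g,'c) monoid_scheme \<Rightarrow> (nat \<Rightarrow> 'g) \<Rightarrow> (nat \<Rightarrow> 'g) \<Rightarrow> nat \<Rightarrow> 'g" where
  "gcomm_prod G a b 0 = \<one>\<^bsub>G\<^esub>"
| "gcomm_prod G a b (Suc i) = gcomm_prod G a b i \<otimes>\<^bsub>G\<^esub> gcomm G (a i) (b i)"

definition Sdelta_rep :: "('g,'c) monoid_scheme \<Rightarrow> 'g set \<Rightarrow> real \<Rightarrow> nat \<Rightarrow> ('g \<Rightarrow> complex mat) \<Rightarrow> bool" where
  "Sdelta_rep G S \<delta> k \<rho> \<longleftrightarrow>
     (\<forall>x\<in>carrier G. unitary_mat k (\<rho> x)) \<and> \<rho> \<one>\<^bsub>G\<^esub> = 1\<^sub>m k \<and>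
     (\<forall>s\<in>S. \<forall>t\<in>S. opnorm (\<rho> (s \<otimes>\<^bsub>G\<^esub> t) - \<rho> s * \<rho> t) < \<delta>)"

text \<open>n-chains are finitely supported functions from n-tuples of group elements to int.\<close>
definition fin_chain :: "'a set \<Rightarrow> ('a \<Rightarrow> int) \<Rightarrow> bool" where
  "fin_chain X f \<longleftrightarrow> finite {p. f p \<noteq> 0} \<and> {p. f p \<noteq> 0} \<subseteq> X"

definition ind :: "bool \<Rightarrow> int" where "ind P = (if P then 1 else 0)"

text \<open>boundary [a|b] = [a] - [ab] + [b]\<close>
definition bd2 :: "('g,'c) monoid_scheme \<Rightarrow> ('g \<times> 'g \<Rightarrow> int) \<Rightarrow> 'g \<Rightarrow> int" where
  "bd2 G f u = (\<Sum>p\<in>{p. f p \<noteq> 0}. f p *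
      (ind (fst p = u) - ind (fst p \<otimes>\<^bsub>G\<^esub> snd p = u) + ind (snd p = u)))"

text \<open>boundary [a|b|c] = [b|c] - [ab|c] + [a|bc] - [a|b]\<close>
definition bd3 :: "('g,'c) monoid_scheme \<Rightarrow> ('g \<times> 'g \<times> 'g \<Rightarrow> int) \<Rightarrow> 'g \<times> 'g \<Rightarrow> int" where
  "bd3 G h q = (\<Sum>t\<in>{t. h t \<noteq> 0}. h t *
      (case t of (a,b,c) \<Rightarrow>
         ind ((b,c) = q) - ind ((a \<otimes>\<^bsub>G\<^esub> b, c) = q) + ind ((a, b \<otimes>\<^bsub>G\<^esub> c) = q) - ind ((a,b) = q)))"

definition is_2cycle :: "('g,'c) monoid_scheme \<Rightarrow> ('g \<times> 'g \<Rightarrow> int) \<Rightarrow> bool" where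
  "is_2cycle G z \<longleftrightarrow> fin_chain (carrier G \<times> carrier G) z \<and> (\<forall>u. bd2 G z u = 0)"

definition homologous2 :: "('g,'c) monoid_scheme \<Rightarrow> ('g \<times> 'g \<Rightarrow> int) \<Rightarrow> ('g \<times> 'g \<Rightarrow> int) \<Rightarrow> bool" where
  "homologous2 G z z' \<longleftrightarrow>
     (\<exists>h. fin_chain (carrier G \<times> carrier G \<times> carrier G) h \<and> (\<forall>q. z q - z' q = bd3 G h q))"

definition formal_sum2 :: "nat \<Rightarrow> (nat \<Rightarrow> int) \<Rightarrow> (nat \<Rightarrow> 'g) \<Rightarrow> (nat \<Rightarrow> 'g) \<Rightarrow> 'g \<times> 'g \<Rightarrow> int" where
  "formal_sum2 m c x y q = (\<Sum>j<m. if (x j, y j) = q then c j else 0)"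

text \<open>Letters of the word a_0 b_0 a_0^-1 b_0^-1 ... a_(g-1) b_(g-1) a_(g-1)^-1 b_(g-1)^-1
  (images in Gamma), and their prefix products.\<close>
definition letter :: "('g,'c) monoid_scheme \<Rightarrow> (nat \<Rightarrow> 'g) \<Rightarrow> (nat \<Rightarrow> 'g) \<Rightarrow> nat \<Rightarrow> 'g" where
  "letter G a b l = (let i = l div 4 in
     if l mod 4 = 0 then a i else if l mod 4 = 1 then b i
     else if l mod 4 = 2 then inv\<^bsub>G\<^esub> (a i) else inv\<^bsub>G\<^esub> (b i))"

fun prefix_prod :: "('g,'c) monoid_scheme \<Rightarrow> (nat \<Rightarrow> 'g) \<Rightarrow> (nat \<Rightarrow> 'g) \<Rightarrow> nat \<Rightarrow> 'g" where
  "prefix_prod G a b 0 = \<one>\<^bsub>G\<^esub>"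
| "prefix_prod G a b (Suc l) = prefix_prod G a b l \<otimes>\<^bsub>G\<^esub> letter G a b l"

text \<open>Bar 2-cycle representing phi([r]) for r = prod_i [a_i,b_i] (with images abar_i, bbar_i):
  sum_{l<4g} [w_0...w_(l-1) | w_l] - sum_i ([abar_i|abar_i^-1] + [bbar_i|bbar_i^-1]) - 2g [1|1].\<close>
definition hopf_cycle :: "('g,'c) monoid_scheme \<Rightarrow> nat \<Rightarrow> (nat \<Rightarrow> 'g) \<Rightarrow> (nat \<Rightarrow> 'g) \<Rightarrow> 'g \<times> 'g \<Rightarrow> int" where
  "hopf_cycle G g a b q =
     (\<Sum>l<4*g. ind ((prefix_prod G a b l, letter G a b l) = q))
     - (\<Sum>i<g. ind ((a i, inv\<^bsub>G\<^esub> (a i)) = q) + ind ((b i, inv\<^bsub>G\<^esub> (b i)) = q))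
     - (if q = (\<one>\<^bsub>G\<^esub>, \<one>\<^bsub>G\<^esub>) then 2 * int g else 0)"

end

theory Submission
  imports Defs "Jordan_Normal_Form.Schur_Decomposition" "HOL-Analysis.Analysis"
begin

text \<open>For an \<open>(S,\<delta>)\<close>-representation \<open>\<rho>\<close> the defect matrices
  \<open>D(x,y) = \<rho>(x) \<rho>(y) \<rho>(xy)\<^sup>*\<close> with \<open>x, y \<in> S\<close> are unitaries close to the identity, and
  \<open>\<omega>(x,y) = tr log D(x,y)\<close> is a 2-cocycle on the relevant elements: near the identity
  \<open>tr log\<close> is invariant under conjugation and additive, since \<open>exp (tr log M) = det M\<close> and a
  continuous function with values in \<open>2\<pi>i\<int>\<close> is constant. Hence pairing \<open>\<omega>\<close> with a boundary
  gives 0, so the cycle \<open>\<Sum> k\<^sub>j [x\<^sub>j|y\<^sub>j]\<close> and the bar cycle of \<open>r\<close> have the same pairing.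
  The latter is computed by telescoping the product of \<open>\<rho>\<close> over the letters of \<open>r\<close> and
  comparing it with \<open>\<Prod> [\<rho>(a\<^sub>i), \<rho>(b\<^sub>i)]\<close>; the relation \<open>\<Prod> [a\<^sub>i, b\<^sub>i] = 1\<close> makes the
  telescoping product close to the identity.\<close>

section \<open>Euclidean norm and operator norm\<close>

lemma vnorm_L2: "vnorm v = L2_set (\<lambda>i. cmod (v $ i)) {..<dim_vec v}"
  unfolding vnorm_def L2_set_def by simp

lemma vnorm_nonneg[simp]: "0 \<le> vnorm v"
  unfolding vnorm_L2 by simp

lemma cmod_index_le_vnorm: assumes "i < dim_vec v" shows "cmod (v $ i) \<le> vnorm v"
  unfolding vnorm_L2 by (rule member_le_L2_set) (use assms in auto)

lemma vnorm_le_sum: "vnorm v \<le> (\<Sum>i<dim_vec v. cmod (v $ i))"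
  unfolding vnorm_L2 by (rule L2_set_le_sum) auto

lemma vnorm_add: assumes "dim_vec u = dim_vec w" shows "vnorm (u + w) \<le> vnorm u + vnorm w"
proof -
  have "vnorm (u + w) = L2_set (\<lambda>i. cmod (u $ i + w $ i)) {..<dim_vec w}"
    unfolding vnorm_L2 by (intro L2_set_cong) auto
  also have "\<dots> \<le> L2_set (\<lambda>i. cmod (u $ i) + cmod (w $ i)) {..<dim_vec w}"
    by (intro L2_set_mono norm_triangle_ineq) auto
  also have "\<dots> \<le> L2_set (\<lambda>i. cmod (u $ i)) {..<dim_vec w} + L2_set (\<lambda>i. cmod (w $ i)) {..<dim_vec w}"
    by (rule L2_set_triangle_ineq)
  finally show ?thesis unfolding vnorm_L2 using assms by simp
qed

lemma vnorm_smult: "vnorm (c \<cdot>\<^sub>v v) = cmod c * vnorm v"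
proof -
  have "vnorm (c \<cdot>\<^sub>v v) = L2_set (\<lambda>i. cmod c * cmod (v $ i)) {..<dim_vec v}"
    unfolding vnorm_L2 by (intro L2_set_cong) (auto simp: norm_mult)
  also have "\<dots> = cmod c * vnorm v" unfolding vnorm_L2 by (simp add: L2_set_right_distrib)
  finally show ?thesis .
qed

lemma vnorm_uminus: "vnorm (- v) = vnorm v"
  unfolding vnorm_def by simp

lemma vnorm_zero_vec[simp]: "vnorm (0\<^sub>v n) = 0"
  unfolding vnorm_def by simp

lemma vnorm_pos: assumes "v \<noteq> 0\<^sub>v (dim_vec v)" shows "0 < vnorm v"
proof -
  obtain i where i: "i < dim_vec v" "v $ i \<noteq> 0"
    using assms by (metis eq_vecI index_zero_vec(1) index_zero_vec(2))
  have "0 < cmod (v $ i)" using i by simp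
  also have "\<dots> \<le> vnorm v" by (rule cmod_index_le_vnorm[OF i(1)])
  finally show ?thesis .
qed

lemma vnorm_unit_vec: assumes "j < n" shows "vnorm (unit_vec n j) = 1"
proof -
  have "(\<Sum>i<n. (cmod (unit_vec n j $ i))\<^sup>2) = (\<Sum>i<n. if i = j then 1 else 0)"
    using assms by (intro sum.cong) (auto simp: unit_vec_def)
  also have "\<dots> = 1" using assms by simp
  finally show ?thesis unfolding vnorm_def by simp
qed

lemma vnorm_mult_mat_vec_le_entry_sum:
  assumes "v \<in> carrier_vec (dim_col A)" "vnorm v \<le> 1"
  shows "vnorm (A *\<^sub>v v) \<le> (\<Sum>i<dim_row A. \<Sum>j<dim_col A. cmod (A $$ (i,j)))"
proof -
  have "vnorm (A *\<^sub>v v) \<le> (\<Sum>i<dim_row A. cmod ((A *\<^sub>v v) $ i))"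
    using vnorm_le_sum[of "A *\<^sub>v v"] by simp
  also have "\<dots> \<le> (\<Sum>i<dim_row A. \<Sum>j<dim_col A. cmod (A $$ (i,j)))"
  proof (intro sum_mono)
    fix i assume i: "i \<in> {..<dim_row A}"
    have "cmod ((A *\<^sub>v v) $ i) = cmod (\<Sum>j<dim_col A. A $$ (i,j) * v $ j)"
      using i assms by (auto simp: scalar_prod_def atLeast0LessThan)
    also have "\<dots> \<le> (\<Sum>j<dim_col A. cmod (A $$ (i,j) * v $ j))" by (rule norm_sum)
    also have "\<dots> \<le> (\<Sum>j<dim_col A. cmod (A $$ (i,j)))"
    proof (intro sum_mono)
      fix j assume j: "j \<in> {..<dim_col A}"
      have "cmod (v $ j) \<le> 1" using cmod_index_le_vnorm[of j v] assms j by auto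
      then show "cmod (A $$ (i,j) * v $ j) \<le> cmod (A $$ (i,j))"
        by (simp add: norm_mult mult_left_le)
    qed
    finally show "cmod ((A *\<^sub>v v) $ i) \<le> (\<Sum>j<dim_col A. cmod (A $$ (i,j)))" .
  qed
  finally show ?thesis .
qed

lemma opnorm_set_bdd_above:
  "bdd_above {vnorm (A *\<^sub>v v) | v. v \<in> carrier_vec (dim_col A) \<and> vnorm v \<le> 1}"
  unfolding bdd_above_def using vnorm_mult_mat_vec_le_entry_sum by blast

lemma vnorm_mult_mat_vec_le_opnorm: assumes "v \<in> carrier_vec (dim_col A)" "vnorm v \<le> 1"
  shows "vnorm (A *\<^sub>v v) \<le> opnorm A"
  unfolding opnorm_def by (rule cSup_upper[OF _ opnorm_set_bdd_above]) (use assms in blast)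

lemma opnorm_le:
  assumes "\<And>v. v \<in> carrier_vec (dim_col A) \<Longrightarrow> vnorm v \<le> 1 \<Longrightarrow> vnorm (A *\<^sub>v v) \<le> c"
  shows "opnorm A \<le> c"
proof -
  have "vnorm (A *\<^sub>v 0\<^sub>v (dim_col A))
      \<in> {vnorm (A *\<^sub>v v) | v. v \<in> carrier_vec (dim_col A) \<and> vnorm v \<le> 1}"
    by force
  then show ?thesis unfolding opnorm_def by (intro cSup_least) (use assms in blast)+
qed

lemma opnorm_nonneg[simp]: "0 \<le> opnorm A"
  using vnorm_mult_mat_vec_le_opnorm[of "0\<^sub>v (dim_col A)" A] vnorm_nonneg[of "A *\<^sub>v 0\<^sub>v (dim_col A)"]
  by (metis order_trans vnorm_zero_vec zero_carrier_vec zero_less_one_class.zero_le_one)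

lemma vnorm_mult_mat_vec_le: assumes "v \<in> carrier_vec (dim_col A)"
  shows "vnorm (A *\<^sub>v v) \<le> opnorm A * vnorm v"
proof (cases "v = 0\<^sub>v (dim_col A)")
  case True
  then have "A *\<^sub>v v = 0\<^sub>v (dim_row A)" by (intro eq_vecI) (auto simp: scalar_prod_def)
  then show ?thesis by simp
next
  case False
  then have pos: "0 < vnorm v" using vnorm_pos[of v] assms by auto
  define w where "w = complex_of_real (1 / vnorm v) \<cdot>\<^sub>v v"
  have w: "w \<in> carrier_vec (dim_col A)" "vnorm w \<le> 1"
    using assms pos by (auto simp: w_def vnorm_smult norm_divide)
  have "A *\<^sub>v w = complex_of_real (1 / vnorm v) \<cdot>\<^sub>v (A *\<^sub>v v)"
    unfolding w_def by (rule mult_mat_vec[of A "dim_row A" "dim_col A"]) (use assms in auto)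
  then have "vnorm (A *\<^sub>v w) = vnorm (A *\<^sub>v v) / vnorm v"
    using pos by (simp add: vnorm_smult norm_divide)
  with vnorm_mult_mat_vec_le_opnorm[OF w] have "vnorm (A *\<^sub>v v) / vnorm v \<le> opnorm A" by simp
  then show ?thesis using pos by (simp add: divide_le_eq mult.commute)
qed

lemma cmod_index_le_opnorm: assumes "i < dim_row A" "j < dim_col A"
  shows "cmod (A $$ (i,j)) \<le> opnorm A"
proof -
  let ?e = "unit_vec (dim_col A) j :: complex Matrix.vec"
  have "(A *\<^sub>v ?e) $ i = A $$ (i,j)"
    using assms by (simp add: scalar_prod_def unit_vec_def if_distrib cong: if_cong)
  then have "cmod (A $$ (i,j)) \<le> vnorm (A *\<^sub>v ?e)"
    using cmod_index_le_vnorm[of i "A *\<^sub>v ?e"] assms by simp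
  also have "\<dots> \<le> opnorm A"
    by (rule vnorm_mult_mat_vec_le_opnorm) (use assms vnorm_unit_vec in auto)
  finally show ?thesis .
qed

lemma opnorm_mult: assumes "A \<in> carrier_mat n m" "B \<in> carrier_mat m p"
  shows "opnorm (A * B) \<le> opnorm A * opnorm B"
proof (rule opnorm_le)
  fix v assume v: "v \<in> carrier_vec (dim_col (A * B))" "vnorm v \<le> 1"
  then have v': "v \<in> carrier_vec p" using assms by simp
  have "vnorm ((A * B) *\<^sub>v v) = vnorm (A *\<^sub>v (B *\<^sub>v v))" using assms v' by simp
  also have "\<dots> \<le> opnorm A * vnorm (B *\<^sub>v v)"
    by (rule vnorm_mult_mat_vec_le) (use assms v' in auto)
  also have "\<dots> \<le> opnorm A * (opnorm B * vnorm v)"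
    by (intro mult_left_mono vnorm_mult_mat_vec_le) (use assms v' in auto)
  also have "\<dots> \<le> opnorm A * opnorm B"
    using v(2) by (intro mult_left_mono) (simp_all add: mult_left_le)
  finally show "vnorm ((A * B) *\<^sub>v v) \<le> opnorm A * opnorm B" .
qed

lemma opnorm_add: assumes "A \<in> carrier_mat n m" "B \<in> carrier_mat n m"
  shows "opnorm (A + B) \<le> opnorm A + opnorm B"
proof (rule opnorm_le)
  fix v assume v: "v \<in> carrier_vec (dim_col (A + B))" "vnorm v \<le> 1"
  then have v': "v \<in> carrier_vec m" using assms by simp
  have "vnorm ((A + B) *\<^sub>v v) = vnorm (A *\<^sub>v v + B *\<^sub>v v)"
    using assms v' by (simp add: add_mult_distrib_mat_vec)
  also have "\<dots> \<le> vnorm (A *\<^sub>v v) + vnorm (B *\<^sub>v v)" by (rule vnorm_add) (use assms in simp)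
  also have "\<dots> \<le> opnorm A + opnorm B"
    by (intro add_mono vnorm_mult_mat_vec_le_opnorm) (use assms v' v in auto)
  finally show "vnorm ((A + B) *\<^sub>v v) \<le> opnorm A + opnorm B" .
qed

lemma opnorm_smult_le: "opnorm (c \<cdot>\<^sub>m A) \<le> cmod c * opnorm A"
proof (rule opnorm_le)
  fix v assume v: "v \<in> carrier_vec (dim_col (c \<cdot>\<^sub>m A))" "vnorm v \<le> 1"
  have "(c \<cdot>\<^sub>m A) *\<^sub>v v = c \<cdot>\<^sub>v (A *\<^sub>v v)"
    using v by (intro eq_vecI) (auto simp: scalar_prod_def sum_distrib_left ac_simps)
  then have "vnorm ((c \<cdot>\<^sub>m A) *\<^sub>v v) = cmod c * vnorm (A *\<^sub>v v)" by (simp add: vnorm_smult)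
  also have "\<dots> \<le> cmod c * opnorm A"
    by (intro mult_left_mono vnorm_mult_mat_vec_le_opnorm) (use v in auto)
  finally show "vnorm ((c \<cdot>\<^sub>m A) *\<^sub>v v) \<le> cmod c * opnorm A" .
qed

lemma opnorm_uminus_le: "opnorm (- A) \<le> opnorm A"
proof (rule opnorm_le)
  fix v assume v: "v \<in> carrier_vec (dim_col (- A))" "vnorm v \<le> 1"
  have "(- A) *\<^sub>v v = - (A *\<^sub>v v)"
    using v by (intro eq_vecI) (auto simp: scalar_prod_def sum_negf)
  then show "vnorm ((- A) *\<^sub>v v) \<le> opnorm A"
    using v vnorm_mult_mat_vec_le_opnorm[of v A] by (simp add: vnorm_uminus)
qed

lemma opnorm_zero_mat[simp]: "opnorm (0\<^sub>m n m :: complex mat) = 0"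
proof -
  have "opnorm (0\<^sub>m n m :: complex mat) \<le> 0"
  proof (rule opnorm_le)
    fix v :: "complex Matrix.vec" assume "v \<in> carrier_vec (dim_col (0\<^sub>m n m :: complex mat))"
    then have "(0\<^sub>m n m :: complex mat) *\<^sub>v v = 0\<^sub>v n" by (intro eq_vecI) (auto simp: scalar_prod_def)
    then show "vnorm ((0\<^sub>m n m :: complex mat) *\<^sub>v v) \<le> 0" by simp
  qed
  then show ?thesis using opnorm_nonneg antisym by blast
qed

lemma opnorm_pow_le: assumes "A \<in> carrier_mat k k"
  shows "opnorm (A ^\<^sub>m n) \<le> opnorm A ^ n"
proof (induction n)
  case 0
  have "opnorm (1\<^sub>m k :: complex mat) \<le> 1" by (rule opnorm_le) simp
  then show ?case using assms by (simp add: carrier_matD)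
next
  case (Suc n)
  have "opnorm (A ^\<^sub>m Suc n) \<le> opnorm (A ^\<^sub>m n) * opnorm A"
    using opnorm_mult[of "A ^\<^sub>m n" k k A k] assms by simp
  also have "\<dots> \<le> opnorm A ^ n * opnorm A" by (intro mult_right_mono Suc) auto
  finally show ?case by (simp add: mult.commute)
qed

section \<open>Adjoints and unitary matrices\<close>

lemma madj_carrier[simp]: "dim_row (madj A) = dim_col A" "dim_col (madj A) = dim_row A"
  unfolding madj_def by auto

lemma madj_index[simp]: "i < dim_col A \<Longrightarrow> j < dim_row A \<Longrightarrow> madj A $$ (i,j) = cnj (A $$ (j,i))"
  unfolding madj_def by auto

lemma madj_carrier_mat[simp]: "A \<in> carrier_mat n m \<Longrightarrow> madj A \<in> carrier_mat m n"
  unfolding carrier_mat_def by auto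

lemma madj_madj[simp]: "madj (madj A) = A"
  by (rule eq_matI) auto

lemma madj_one[simp]: "madj (1\<^sub>m k) = 1\<^sub>m k"
  by (rule eq_matI) auto

lemma madj_mult: assumes "A \<in> carrier_mat n m" "B \<in> carrier_mat m p"
  shows "madj (A * B) = madj B * madj A"
proof (rule eq_matI)
  fix i j assume "i < dim_row (madj B * madj A)" "j < dim_col (madj B * madj A)"
  then have i: "i < p" and j: "j < n" using assms by auto
  have "madj (A * B) $$ (i,j) = cnj (\<Sum>l<m. A $$ (j,l) * B $$ (l,i))"
    using assms i j by (simp add: scalar_prod_def atLeast0LessThan)
  also have "\<dots> = (\<Sum>l<m. cnj (B $$ (l,i)) * cnj (A $$ (j,l)))"
    by (simp add: cnj_sum mult.commute)
  also have "\<dots> = (madj B * madj A) $$ (i,j)"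
    using assms i j by (simp add: scalar_prod_def atLeast0LessThan)
  finally show "madj (A * B) $$ (i,j) = (madj B * madj A) $$ (i,j)" .
qed (use assms in auto)

lemma complex_of_real_vnorm_sq: "complex_of_real ((vnorm w)\<^sup>2) = (\<Sum>i<dim_vec w. cnj (w $ i) * w $ i)"
proof -
  have "(vnorm w)\<^sup>2 = (\<Sum>i<dim_vec w. (cmod (w $ i))\<^sup>2)"
    unfolding vnorm_def by (simp add: sum_nonneg)
  moreover have "\<And>z. (complex_of_real (cmod z))\<^sup>2 = cnj z * z"
    by (metis complex_norm_square of_real_power mult.commute)
  ultimately show ?thesis by simp
qed

lemma sum_cnj_mult_mat_vec:
  assumes U: "U \<in> carrier_mat n k" and v: "v \<in> carrier_vec k"
  shows "(\<Sum>i<n. cnj ((U *\<^sub>v v) $ i) * (U *\<^sub>v v) $ i)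
    = (\<Sum>j<k. \<Sum>l<k. cnj (v $ j) * v $ l * (madj U * U) $$ (j,l))"
proof -
  have Uv: "(U *\<^sub>v v) $ i = (\<Sum>j<k. U $$ (i,j) * v $ j)" if "i < n" for i
    using U v that by (simp add: scalar_prod_def atLeast0LessThan)
  have "cnj (\<Sum>j<k. U $$ (i,j) * v $ j) * (\<Sum>l<k. U $$ (i,l) * v $ l)
      = (\<Sum>j<k. \<Sum>l<k. cnj (v $ j) * v $ l * (cnj (U $$ (i,j)) * U $$ (i,l)))" for i
    by (simp add: cnj_sum sum_product mult_ac) (rule sum.swap)
  then have "(\<Sum>i<n. cnj ((U *\<^sub>v v) $ i) * (U *\<^sub>v v) $ i)
      = (\<Sum>i<n. \<Sum>j<k. \<Sum>l<k. cnj (v $ j) * v $ l * (cnj (U $$ (i,j)) * U $$ (i,l)))"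
    using Uv by (simp del: index_mult_mat_vec)
  also have "\<dots> = (\<Sum>j<k. \<Sum>l<k. \<Sum>i<n. cnj (v $ j) * v $ l * (cnj (U $$ (i,j)) * U $$ (i,l)))"
    by (subst sum.swap) (rule sum.cong[OF refl], rule sum.swap)
  also have "\<dots> = (\<Sum>j<k. \<Sum>l<k. cnj (v $ j) * v $ l * (madj U * U) $$ (j,l))"
    using U by (simp add: scalar_prod_def atLeast0LessThan sum_distrib_left)
  finally show ?thesis .
qed

lemma unitary_vnorm: assumes U: "U \<in> carrier_mat k k" and adj: "madj U * U = 1\<^sub>m k"
  and v: "v \<in> carrier_vec k"
  shows "vnorm (U *\<^sub>v v) = vnorm v"
proof -
  have "complex_of_real ((vnorm (U *\<^sub>v v))\<^sup>2)
      = (\<Sum>j<k. \<Sum>l<k. cnj (v $ j) * v $ l * (if j = l then 1 else 0))"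
    unfolding complex_of_real_vnorm_sq using sum_cnj_mult_mat_vec[OF U v] U adj by simp
  also have "\<dots> = complex_of_real ((vnorm v)\<^sup>2)"
    unfolding complex_of_real_vnorm_sq using v by (simp add: if_distrib cong: if_cong)
  finally have "(vnorm (U *\<^sub>v v))\<^sup>2 = (vnorm v)\<^sup>2" using of_real_eq_iff by blast
  then show ?thesis by (simp add: power2_eq_iff_nonneg)
qed

lemma unitary_opnorm_le: assumes "unitary_mat k U" shows "opnorm U \<le> 1"
  using assms unitary_vnorm unfolding unitary_mat_def by (intro opnorm_le) auto

text \<open>As \<open>k\<close> does not occur in their left-hand
  sides, the simplifier can use them only with \<open>k\<close> fixed: inside this context, or later via
  \<open>[where k = k]\<close>.\<close>

context fixes k :: nat
begin

lemma assoc_mult_sq: "A \<in> carrier_mat k k \<Longrightarrow> B \<in> carrier_mat k k \<Longrightarrow> C \<in> carrier_mat k k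
   \<Longrightarrow> (A :: complex mat) * B * C = A * (B * C)"
  by (rule assoc_mult_mat)

lemma mult_carrier_sq: "A \<in> carrier_mat k k \<Longrightarrow> B \<in> carrier_mat k k \<Longrightarrow> (A :: complex mat) * B \<in> carrier_mat k k"
  by simp

lemma madj_carrier_sq: "A \<in> carrier_mat k k \<Longrightarrow> madj A \<in> carrier_mat k k"
  by simp

lemma madj_mult_sq: "A \<in> carrier_mat k k \<Longrightarrow> B \<in> carrier_mat k k \<Longrightarrow> madj (A * B) = madj B * madj A"
  by (rule madj_mult)

lemma left_mult_one_sq: "(A :: complex mat) \<in> carrier_mat k k \<Longrightarrow> 1\<^sub>m k * A = A"
  by simp

lemma right_mult_one_sq: "(A :: complex mat) \<in> carrier_mat k k \<Longrightarrow> A * 1\<^sub>m k = A"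
  by simp

lemma unitary_carrier: "unitary_mat k U \<Longrightarrow> U \<in> carrier_mat k k"
  unfolding unitary_mat_def by simp

lemma unitary_madj_mult: "unitary_mat k U \<Longrightarrow> madj U * U = 1\<^sub>m k"
  unfolding unitary_mat_def by simp

lemma unitary_mult_madj: "unitary_mat k U \<Longrightarrow> U * madj U = 1\<^sub>m k"
  unfolding unitary_mat_def by simp

lemma unitary_madj_mult_cancel: "unitary_mat k U \<Longrightarrow> (X :: complex mat) \<in> carrier_mat k k \<Longrightarrow> madj U * (U * X) = X"
  using assoc_mult_sq[of "madj U" U X] unitary_madj_mult[of U] unitary_carrier[of U] by simp

lemma unitary_mult_madj_cancel: "unitary_mat k U \<Longrightarrow> (X :: complex mat) \<in> carrier_mat k k \<Longrightarrow> U * (madj U * X) = X"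
  using assoc_mult_sq[of U "madj U" X] unitary_mult_madj[of U] unitary_carrier[of U] by simp

lemma unitary_one: "unitary_mat k (1\<^sub>m k)"
  unfolding unitary_mat_def by simp

lemma unitary_madj: "unitary_mat k U \<Longrightarrow> unitary_mat k (madj U)"
  unfolding unitary_mat_def by simp

lemma unitary_mult: assumes "unitary_mat k U" "unitary_mat k V" shows "unitary_mat k (U * V)"
proof -
  have c: "U \<in> carrier_mat k k" "V \<in> carrier_mat k k" using assms unitary_carrier by auto
  have "madj (U * V) * (U * V) = madj V * (madj U * (U * V))"
    using c by (simp add: madj_mult_sq assoc_mult_sq)
  also have "\<dots> = 1\<^sub>m k" using c assms by (simp add: unitary_madj_mult_cancel unitary_madj_mult)
  finally have left: "madj (U * V) * (U * V) = 1\<^sub>m k" .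
  have "(U * V) * madj (U * V) = U * (V * (madj V * madj U))"
    using c by (simp add: madj_mult_sq assoc_mult_sq mult_carrier_sq madj_carrier_sq)
  also have "\<dots> = 1\<^sub>m k" using c assms by (simp add: unitary_mult_madj_cancel unitary_mult_madj)
  finally have right: "(U * V) * madj (U * V) = 1\<^sub>m k" .
  show ?thesis unfolding unitary_mat_def using c left right by simp
qed

end

section \<open>The trace of the logarithm series\<close>

lemma minus_one_carrier_mat[simp]: "(A :: complex mat) \<in> carrier_mat k k \<Longrightarrow> A - 1\<^sub>m k \<in> carrier_mat k k"
  by (simp add: minus_carrier_mat)

definition log_coeff :: "nat \<Rightarrow> complex" where "log_coeff n = (-1) ^ n / of_nat (Suc n)"

lemma norm_log_coeff_le: "cmod (log_coeff n) \<le> 1"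
proof -
  have "cmod (log_coeff n) = 1 / real (Suc n)"
    unfolding log_coeff_def norm_divide norm_power
    by (simp only: norm_of_nat norm_minus_cancel norm_one power_one)
  then show ?thesis by simp
qed

lemma cmod_mtrace_le: assumes "A \<in> carrier_mat k k"
  shows "cmod (mtrace A) \<le> real k * opnorm A"
proof -
  have "cmod (mtrace A) \<le> (\<Sum>i<k. cmod (A $$ (i,i)))"
    unfolding mtrace_def using assms by (simp add: norm_sum)
  also have "\<dots> \<le> (\<Sum>i<k. opnorm A)"
    by (intro sum_mono cmod_index_le_opnorm) (use assms in auto)
  finally show ?thesis by simp
qed

lemma mtrace_mult_comm: assumes "A \<in> carrier_mat n m" "B \<in> carrier_mat m n"
  shows "mtrace (A * B) = mtrace (B * A)"
proof -
  have "mtrace (A * B) = (\<Sum>i<n. \<Sum>j<m. A $$ (i,j) * B $$ (j,i))"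
    unfolding mtrace_def using assms by (auto simp: scalar_prod_def atLeast0LessThan intro!: sum.cong)
  also have "\<dots> = (\<Sum>j<m. \<Sum>i<n. B $$ (j,i) * A $$ (i,j))"
    by (subst sum.swap) (simp add: mult.commute)
  also have "\<dots> = mtrace (B * A)"
    unfolding mtrace_def using assms by (auto simp: scalar_prod_def atLeast0LessThan intro!: sum.cong)
  finally show ?thesis .
qed

lemma mtrace_similar_mat_wit: assumes "similar_mat_wit X Y P Q"
  shows "mtrace X = mtrace Y"
proof -
  define n where "n = dim_row X"
  from similar_mat_witD[OF n_def assms] have
    c: "Q * P = 1\<^sub>m n" "X = P * Y * Q"
    "Y \<in> carrier_mat n n" "P \<in> carrier_mat n n" "Q \<in> carrier_mat n n"
    by auto
  have "mtrace X = mtrace (P * (Y * Q))" using c by (simp add: assoc_mult_mat[of P n n Y n Q n])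
  also have "\<dots> = mtrace ((Y * Q) * P)" by (rule mtrace_mult_comm) (use c in auto)
  also have "\<dots> = mtrace Y" using c by (simp add: assoc_mult_mat[of Y n n Q n P n])
  finally show ?thesis .
qed

lemma mtrace_mlog_sums:
  assumes M: "M \<in> carrier_mat k k" and small: "opnorm (M - 1\<^sub>m k) < 1"
  shows "(\<lambda>n. log_coeff n * mtrace ((M - 1\<^sub>m k) ^\<^sub>m Suc n)) sums mtrace (mlog M)"
proof -
  define X where "X = M - 1\<^sub>m k"
  have X: "X \<in> carrier_mat k k" using M by (simp add: X_def)
  define f where "f i n = log_coeff n * (X ^\<^sub>m Suc n) $$ (i,i)" for i n
  have bound: "cmod (f i n) \<le> opnorm X ^ Suc n" if "i < k" for i n
  proof -
    have "cmod (f i n) \<le> 1 * cmod ((X ^\<^sub>m Suc n) $$ (i,i))"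
      unfolding f_def norm_mult by (intro mult_right_mono norm_log_coeff_le) auto
    also have "\<dots> \<le> opnorm (X ^\<^sub>m Suc n)"
      using that X by (intro order_trans[OF _ cmod_index_le_opnorm[of i _ i]]) auto
    also have "\<dots> \<le> opnorm X ^ Suc n" by (rule opnorm_pow_le[OF X])
    finally show ?thesis .
  qed
  have "summable (f i)" if "i < k" for i
  proof (rule summable_comparison_test[where g = "\<lambda>n. opnorm X ^ Suc n"])
    show "\<exists>N. \<forall>n\<ge>N. norm (f i n) \<le> opnorm X ^ Suc n" using bound[OF that] by blast
    show "summable (\<lambda>n. opnorm X ^ Suc n)" using small by (simp add: X_def summable_geometric)
  qed
  then have "(\<lambda>n. \<Sum>i<k. f i n) sums (\<Sum>i<k. suminf (f i))"
    by (intro sums_sum) (use summable_sums in blast)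
  moreover have "(\<Sum>i<k. f i n) = log_coeff n * mtrace ((M - 1\<^sub>m k) ^\<^sub>m Suc n)" for n
    unfolding f_def mtrace_def X_def using M by (simp add: sum_distrib_left)
  moreover have "(\<Sum>i<k. suminf (f i)) = mtrace (mlog M)"
    unfolding mtrace_def mlog_def f_def X_def log_coeff_def using M by simp
  ultimately show ?thesis by simp
qed

lemma mtrace_mlog_one[simp]: "mtrace (mlog (1\<^sub>m k)) = 0"
proof -
  have z: "1\<^sub>m k - 1\<^sub>m k = (0\<^sub>m k k :: complex mat)" by (intro eq_matI) auto
  have "(0\<^sub>m k k :: complex mat) ^\<^sub>m Suc n = 0\<^sub>m k k" for n
    using right_mult_zero_mat[OF pow_carrier_mat[OF zero_carrier_mat[of k k]], of n k]
    by (simp only: pow_mat.simps)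
  then have "(\<lambda>n. 0) sums mtrace (mlog (1\<^sub>m k :: complex mat))"
    using mtrace_mlog_sums[of "1\<^sub>m k" k] by (simp add: z mtrace_def)
  then show ?thesis using sums_zero sums_unique2 by blast
qed

lemma upper_triangular_mult:
  assumes A: "A \<in> carrier_mat k k" and B: "B \<in> carrier_mat k k"
    and uA: "upper_triangular A" and uB: "upper_triangular B"
  shows "upper_triangular (A * B)" "\<And>i. i < k \<Longrightarrow> (A * B) $$ (i,i) = A $$ (i,i) * B $$ (i,i)"
proof -
  have zero: "A $$ (i,l) * B $$ (l,j) = 0" if "i < k" "l < k" "l < i \<or> j < l" for i j l
  proof -
    have "l < i \<Longrightarrow> A $$ (i,l) = 0" "j < l \<Longrightarrow> B $$ (l,j) = 0"
      using uA uB A B that unfolding upper_triangular_def by auto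
    then show ?thesis using that(3) by auto
  qed
  have e: "(A * B) $$ (i,j) = (\<Sum>l<k. A $$ (i,l) * B $$ (l,j))" if "i < k" "j < k" for i j
    using A B that by (simp add: scalar_prod_def atLeast0LessThan)
  show "upper_triangular (A * B)"
  proof (rule upper_triangularI)
    fix i j assume ij: "j < i" "i < dim_row (A * B)"
    then have i: "i < k" and j: "j < k" using A by auto
    show "(A * B) $$ (i,j) = 0"
      unfolding e[OF i j] using ij(1) by (intro sum.neutral ballI zero[OF i]) auto
  qed
  fix i assume i: "i < k"
  have "(\<Sum>l<k. A $$ (i,l) * B $$ (l,i)) = (\<Sum>l\<in>{i}. A $$ (i,l) * B $$ (l,i))"
    using i by (intro sum.mono_neutral_right ballI zero[OF i]) auto
  then show "(A * B) $$ (i,i) = A $$ (i,i) * B $$ (i,i)" using e[OF i i] by simp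
qed

lemma upper_triangular_pow:
  assumes A: "A \<in> carrier_mat k k" and uA: "upper_triangular A"
  shows "upper_triangular (A ^\<^sub>m n) \<and> (\<forall>i<k. (A ^\<^sub>m n) $$ (i,i) = (A $$ (i,i)) ^ n)"
proof (induction n)
  case 0 then show ?case using A by simp
next
  case (Suc n)
  have "A ^\<^sub>m n \<in> carrier_mat k k" using A by simp
  then show ?case using upper_triangular_mult[OF _ A _ uA] Suc by (simp add: power_commutes)
qed

lemma cmod_eigenvalue_minus_one_le:
  assumes M: "M \<in> carrier_mat k k" and ev: "eigenvalue M \<mu>"
  shows "cmod (\<mu> - 1) \<le> opnorm (M - 1\<^sub>m k)"
proof -
  obtain v where v: "v \<in> carrier_vec k" "v \<noteq> 0\<^sub>v k" "M *\<^sub>v v = \<mu> \<cdot>\<^sub>v v"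
    using ev M unfolding eigenvalue_def eigenvector_def by auto
  have "(M - 1\<^sub>m k) *\<^sub>v v = M *\<^sub>v v - 1\<^sub>m k *\<^sub>v v"
    using M v by (simp add: minus_mult_distrib_mat_vec)
  also have "\<dots> = (\<mu> - 1) \<cdot>\<^sub>v v" using v by (intro eq_vecI) (auto simp: algebra_simps)
  finally have "cmod (\<mu> - 1) * vnorm v = vnorm ((M - 1\<^sub>m k) *\<^sub>v v)" by (simp add: vnorm_smult)
  also have "\<dots> \<le> opnorm (M - 1\<^sub>m k) * vnorm v" by (rule vnorm_mult_mat_vec_le) (use v M in auto)
  finally show ?thesis using vnorm_pos[of v] v by simp
qed

lemma Ln_one_plus_sums: assumes "cmod z < 1"
  shows "(\<lambda>n. log_coeff n * z ^ Suc n) sums Ln (1 + z)"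
proof -
  have "(\<lambda>n. (-1)^Suc n / of_nat n * z^n) sums Ln (1 + z)" by (rule Ln_series[OF assms])
  then have "(\<lambda>n. (-1)^Suc (Suc n) / of_nat (Suc n) * z^(Suc n)) sums Ln (1 + z)"
    by (subst sums_Suc_iff) simp
  then show ?thesis unfolding log_coeff_def by simp
qed

lemma similar_mat_wit_minus_one:
  fixes M :: "complex mat"
  assumes M: "M \<in> carrier_mat k k" and sim: "similar_mat_wit M B P Q"
  shows "similar_mat_wit (M - 1\<^sub>m k) (B - 1\<^sub>m k) P Q"
proof -
  note c = similar_mat_witD2[OF M sim]
  have "P * (B - 1\<^sub>m k) * Q = (P * B - P) * Q"
    using c by (simp add: mult_minus_distrib_mat[of P k k B k])
  also have "\<dots> = P * B * Q - P * Q"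
    using c by (simp add: minus_mult_distrib_mat[of "P * B" k k P Q k])
  also have "\<dots> = M - 1\<^sub>m k" using c by simp
  finally show ?thesis unfolding similar_mat_wit_def Let_def using c M by auto
qed

lemma mtrace_pow_upper_triangular:
  assumes "B \<in> carrier_mat k k" "upper_triangular B"
  shows "mtrace (B ^\<^sub>m n) = (\<Sum>i<k. (B $$ (i,i)) ^ n)"
  using upper_triangular_pow[OF assms, of n] assms(1) unfolding mtrace_def by simp

text \<open>Both sides are computed on a Schur form of \<open>M\<close>: the series for the trace of the
  logarithm becomes the sum of the scalar series \<open>Ln \<mu>\<close> over the eigenvalues \<open>\<mu>\<close>, which
  all lie in the unit disc around 1.\<close>

lemma exp_mtrace_mlog:
  assumes M: "M \<in> carrier_mat k k" and small: "opnorm (M - 1\<^sub>m k) < 1"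
  shows "exp (mtrace (mlog M)) = Determinant.det M"
proof -
  obtain es where es: "char_poly M = (\<Prod>a\<leftarrow>es. [:- a, 1:])" "length es = k"
    using char_poly_factorized[OF M] by blast
  obtain B P Q where sd: "schur_decomposition M es = (B,P,Q)" by (metis prod_cases3)
  have sim: "similar_mat_wit M B P Q" and ut: "upper_triangular B" and dg: "diag_mat B = es"
    using schur_decomposition[OF M es(1) sd] by auto
  have B: "B \<in> carrier_mat k k" using similar_mat_witD2[OF M sim] by auto
  have Bi: "B $$ (i,i) = es ! i" if "i < k" for i
    using dg that B unfolding diag_mat_def by auto
  have "poly (char_poly M) (es ! i) = 0" if "i < k" for i
  proof -
    have "es ! i \<in> set es" using that es(2) by simp
    then show ?thesis unfolding es(1) poly_prod_list prod_list_zero_iff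
      by (auto intro!: image_eqI[where x = "es ! i"])
  qed
  then have close: "cmod (es ! i - 1) < 1" if "i < k" for i
    using cmod_eigenvalue_minus_one_le[OF M, of "es ! i"] eigenvalue_root_char_poly[OF M] that small
    by auto
  have B1: "B - 1\<^sub>m k \<in> carrier_mat k k" "upper_triangular (B - 1\<^sub>m k)"
    using B ut unfolding upper_triangular_def by auto
  have tr: "mtrace ((M - 1\<^sub>m k) ^\<^sub>m n) = (\<Sum>i<k. (es ! i - 1) ^ n)" for n
    using mtrace_similar_mat_wit[OF similar_mat_wit_pow[OF similar_mat_wit_minus_one[OF M sim]]]
      mtrace_pow_upper_triangular[OF B1] B Bi by simp
  have "(\<lambda>n. \<Sum>i<k. log_coeff n * (es ! i - 1) ^ Suc n) sums (\<Sum>i<k. Ln (1 + (es ! i - 1)))"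
    by (intro sums_sum Ln_one_plus_sums close) auto
  then have "(\<lambda>n. log_coeff n * mtrace ((M - 1\<^sub>m k) ^\<^sub>m Suc n)) sums (\<Sum>i<k. Ln (es ! i))"
    unfolding tr sum_distrib_left by simp
  then have "mtrace (mlog M) = (\<Sum>i<k. Ln (es ! i))"
    using sums_unique2[OF mtrace_mlog_sums[OF M small]] by simp
  then have "exp (mtrace (mlog M)) = (\<Prod>i<k. exp (Ln (es ! i)))" by (simp add: exp_sum)
  also have "\<dots> = (\<Prod>i<k. es ! i)"
    using close by (intro prod.cong refl exp_Ln) fastforce
  also have "\<dots> = Determinant.det B"
    using det_upper_triangular[OF ut B] dg es(2) by (simp add: prod.list_conv_set_nth atLeast0LessThan)
  also have "\<dots> = Determinant.det M"
    using det_similar[of M B] sim unfolding similar_mat_def by (metis (no_types))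
  finally show ?thesis .
qed
section \<open>Additivity and conjugation invariance of the trace of the logarithm\<close>

definition continuous_mat_on :: "real set \<Rightarrow> nat \<Rightarrow> (real \<Rightarrow> complex mat) \<Rightarrow> bool" where
  "continuous_mat_on S k A \<longleftrightarrow> (\<forall>t. A t \<in> carrier_mat k k) \<and>
     (\<forall>i<k. \<forall>j<k. continuous_on S (\<lambda>t. A t $$ (i,j)))"

lemma continuous_mat_on_mult: assumes "continuous_mat_on S k A" "continuous_mat_on S k B"
  shows "continuous_mat_on S k (\<lambda>t. A t * B t)"
proof -
  have c: "A t \<in> carrier_mat k k" "B t \<in> carrier_mat k k" for t
    using assms by (auto simp: continuous_mat_on_def)
  have e: "(A t * B t) $$ (i,j) = (\<Sum>l<k. A t $$ (i,l) * B t $$ (l,j))" if "i < k" "j < k" for i j t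
    using c[of t] that by (simp add: scalar_prod_def atLeast0LessThan)
  show ?thesis unfolding continuous_mat_on_def
  proof (intro conjI allI impI)
    fix t show "A t * B t \<in> carrier_mat k k" using c[of t] by simp
  next
    fix i j assume ij: "i < k" "j < k"
    have "continuous_on S (\<lambda>t. \<Sum>l<k. A t $$ (i,l) * B t $$ (l,j))"
      using assms ij by (intro continuous_intros) (auto simp: continuous_mat_on_def)
    then show "continuous_on S (\<lambda>t. (A t * B t) $$ (i,j))" using e[OF ij] by simp
  qed
qed

lemma continuous_mat_on_pow: assumes "continuous_mat_on S k A"
  shows "continuous_mat_on S k (\<lambda>t. A t ^\<^sub>m n)"
proof (induction n)
  case 0
  have "A t ^\<^sub>m 0 = 1\<^sub>m k" for t using assms unfolding continuous_mat_on_def by auto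
  then show ?case unfolding continuous_mat_on_def by auto
next
  case (Suc n)
  show ?case using continuous_mat_on_mult[OF Suc assms] by simp
qed

lemma continuous_mat_on_minus_const: assumes "continuous_mat_on S k A" "B \<in> carrier_mat k k"
  shows "continuous_mat_on S k (\<lambda>t. A t - B)"
  using assms unfolding continuous_mat_on_def by (auto intro!: continuous_intros)

lemma continuous_on_mtrace: assumes "continuous_mat_on S k A"
  shows "continuous_on S (\<lambda>t. mtrace (A t))"
proof -
  have "mtrace (A t) = (\<Sum>i<k. A t $$ (i,i))" for t
    using assms unfolding continuous_mat_on_def mtrace_def by auto
  moreover have "continuous_on S (\<lambda>t. \<Sum>i<k. A t $$ (i,i))"
    using assms unfolding continuous_mat_on_def by (auto intro!: continuous_intros)
  ultimately show ?thesis by simp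
qed

lemma continuous_mat_on_segment: assumes "X \<in> carrier_mat k k"
  shows "continuous_mat_on S k (\<lambda>t. 1\<^sub>m k + complex_of_real t \<cdot>\<^sub>m X)"
  unfolding continuous_mat_on_def using assms by (auto intro!: continuous_intros)

lemma continuous_on_mtrace_mlog:
  assumes A: "continuous_mat_on S k M" and r: "r < 1"
    and small: "\<And>t. t \<in> S \<Longrightarrow> opnorm (M t - 1\<^sub>m k) \<le> r"
  shows "continuous_on S (\<lambda>t. mtrace (mlog (M t)))"
proof (cases "S = {}")
  case False
  then have r0: "0 \<le> r" using small opnorm_nonneg order_trans by blast
  have Mc: "M t \<in> carrier_mat k k" for t using A by (simp add: continuous_mat_on_def)
  define f where "f n t = log_coeff n * mtrace ((M t - 1\<^sub>m k) ^\<^sub>m Suc n)" for n t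
  have "norm (f n t) \<le> real k * r ^ Suc n" if t: "t \<in> S" for n t
  proof -
    have X: "M t - 1\<^sub>m k \<in> carrier_mat k k" using Mc[of t] by auto
    have "norm (f n t) \<le> 1 * cmod (mtrace ((M t - 1\<^sub>m k) ^\<^sub>m Suc n))"
      unfolding f_def norm_mult by (intro mult_right_mono norm_log_coeff_le) auto
    also have "\<dots> \<le> real k * opnorm ((M t - 1\<^sub>m k) ^\<^sub>m Suc n)"
      using cmod_mtrace_le[OF pow_carrier_mat[OF X], of "Suc n"] by (simp only: mult_1)
    also have "\<dots> \<le> real k * opnorm (M t - 1\<^sub>m k) ^ Suc n"
      by (intro mult_left_mono opnorm_pow_le[OF X]) auto
    also have "\<dots> \<le> real k * r ^ Suc n"
      by (intro mult_left_mono power_mono small t) auto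
    finally show ?thesis .
  qed
  moreover have "summable (\<lambda>n. real k * r ^ Suc n)"
    using r r0 by (intro summable_mult) (simp add: summable_geometric)
  ultimately have "uniform_limit S (\<lambda>n t. \<Sum>i<n. f i t) (\<lambda>t. suminf (\<lambda>i. f i t)) sequentially"
    by (rule Weierstrass_m_test)
  moreover have "continuous_on S (f n)" for n
    unfolding f_def using A
    by (intro continuous_intros continuous_on_mtrace continuous_mat_on_pow continuous_mat_on_minus_const) auto
  ultimately have "continuous_on S (\<lambda>t. suminf (\<lambda>i. f i t))"
    by (intro uniform_limit_theorem) (auto intro!: always_eventually continuous_intros)
  moreover have "mtrace (mlog (M t)) = suminf (\<lambda>i. f i t)" if "t \<in> S" for t
    using mtrace_mlog_sums[OF Mc, of t] small[OF that] r unfolding f_def by (simp add: sums_iff)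
  ultimately show ?thesis using continuous_on_cong by force
qed simp

lemma mult_minus_one_eq:
  fixes P Q :: "complex mat" assumes "P \<in> carrier_mat k k" "Q \<in> carrier_mat k k"
  shows "P * Q - 1\<^sub>m k = (P - 1\<^sub>m k) * (Q - 1\<^sub>m k) + (P - 1\<^sub>m k) + (Q - 1\<^sub>m k)"
  using assms
  by (intro eq_matI) (auto simp: scalar_prod_def atLeast0LessThan algebra_simps sum_subtractf
      sum.distrib if_distrib[of "(*) _"] cong: if_cong)

lemma opnorm_mult_minus_one_le:
  fixes P Q :: "complex mat" assumes P: "P \<in> carrier_mat k k" and Q: "Q \<in> carrier_mat k k"
  shows "opnorm (P * Q - 1\<^sub>m k)
    \<le> opnorm (P - 1\<^sub>m k) + opnorm (Q - 1\<^sub>m k) + opnorm (P - 1\<^sub>m k) * opnorm (Q - 1\<^sub>m k)"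
proof -
  have c: "P - 1\<^sub>m k \<in> carrier_mat k k" "Q - 1\<^sub>m k \<in> carrier_mat k k" using P Q by auto
  have "opnorm (P * Q - 1\<^sub>m k)
      \<le> opnorm ((P - 1\<^sub>m k) * (Q - 1\<^sub>m k) + (P - 1\<^sub>m k)) + opnorm (Q - 1\<^sub>m k)"
    unfolding mult_minus_one_eq[OF P Q] using c by (intro opnorm_add) auto
  also have "\<dots> \<le> opnorm ((P - 1\<^sub>m k) * (Q - 1\<^sub>m k)) + opnorm (P - 1\<^sub>m k) + opnorm (Q - 1\<^sub>m k)"
    using opnorm_add[OF mult_carrier_mat[OF c] c(1)] by simp
  also have "\<dots> \<le> opnorm (P - 1\<^sub>m k) * opnorm (Q - 1\<^sub>m k) + opnorm (P - 1\<^sub>m k) + opnorm (Q - 1\<^sub>m k)"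
    using opnorm_mult[OF c] by simp
  finally show ?thesis by simp
qed

lemma continuous_exp_eq_one_imp_constant:
  fixes f :: "real \<Rightarrow> complex"
  assumes "connected S" "continuous_on S f" "\<And>t. t \<in> S \<Longrightarrow> exp (f t) = 1"
  shows "f constant_on S"
proof (rule continuous_discrete_range_constant[OF assms(1,2)])
  fix x assume x: "x \<in> S"
  show "\<exists>e>0. \<forall>y. y \<in> S \<and> f y \<noteq> f x \<longrightarrow> e \<le> norm (f y - f x)"
  proof (intro exI[of _ "2 * pi"] conjI allI impI)
    fix y assume y: "y \<in> S \<and> f y \<noteq> f x"
    then obtain n :: int where n: "f y = f x + (of_int (2 * n) * pi) * \<i>"
      using assms(3) x exp_eq by metis
    then have "1 \<le> \<bar>real_of_int n\<bar>" using y by auto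
    then show "2 * pi \<le> norm (f y - f x)" using n by (simp add: norm_mult abs_mult)
  qed simp
qed

lemma opnorm_segment_minus_one_le:
  assumes X: "X \<in> carrier_mat k k" and t: "t \<in> {0..1}" and r: "opnorm X \<le> r"
  shows "opnorm ((1\<^sub>m k + complex_of_real t \<cdot>\<^sub>m X) - 1\<^sub>m k) \<le> r"
proof -
  have "(1\<^sub>m k + complex_of_real t \<cdot>\<^sub>m X) - 1\<^sub>m k = complex_of_real t \<cdot>\<^sub>m X"
    by (rule eq_matI) (use X in auto)
  moreover have "cmod (complex_of_real t) * opnorm X \<le> 1 * r"
    using t r by (intro mult_mono) auto
  ultimately show ?thesis using opnorm_smult_le[of "complex_of_real t" X] by simp
qed

lemma exp_mtrace_mlog_mult_diff:
  assumes A: "A \<in> carrier_mat k k" and B: "B \<in> carrier_mat k k"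
    and "opnorm (A - 1\<^sub>m k) < 1" "opnorm (B - 1\<^sub>m k) < 1" "opnorm (A * B - 1\<^sub>m k) < 1"
  shows "exp (mtrace (mlog (A * B)) - mtrace (mlog A) - mtrace (mlog B)) = 1"
proof -
  have "exp (mtrace (mlog A)) \<noteq> 0" "exp (mtrace (mlog B)) \<noteq> 0" by simp_all
  then show ?thesis
    unfolding exp_diff
    using exp_mtrace_mlog[OF mult_carrier_mat[OF A B]] exp_mtrace_mlog[OF A] exp_mtrace_mlog[OF B]
      assms det_mult[OF A B] by simp
qed

text \<open>Along the segments \<open>t \<mapsto> 1 + t (A - 1)\<close> and \<open>t \<mapsto> 1 + t (B - 1)\<close> the defect of
  additivity is continuous with values in \<open>2\<pi>i\<int>\<close>, because \<open>exp \<circ> mtrace \<circ> mlog = det\<close>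
  and \<open>det\<close> is multiplicative; it vanishes at \<open>t = 0\<close>.\<close>

lemma mtrace_mlog_mult:
  assumes A: "A \<in> carrier_mat k k" and B: "B \<in> carrier_mat k k"
    and nA: "opnorm (A - 1\<^sub>m k) \<le> 1/3" and nB: "opnorm (B - 1\<^sub>m k) \<le> 1/3"
  shows "mtrace (mlog (A * B)) = mtrace (mlog A) + mtrace (mlog B)"
proof -
  define At where "At t = 1\<^sub>m k + complex_of_real t \<cdot>\<^sub>m (A - 1\<^sub>m k)" for t
  define Bt where "Bt t = 1\<^sub>m k + complex_of_real t \<cdot>\<^sub>m (B - 1\<^sub>m k)" for t
  have Atc: "At t \<in> carrier_mat k k" and Btc: "Bt t \<in> carrier_mat k k" for t
    using A B by (auto simp: At_def Bt_def)
  have nAt: "opnorm (At t - 1\<^sub>m k) \<le> 1/3" and nBt: "opnorm (Bt t - 1\<^sub>m k) \<le> 1/3"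
    if "t \<in> {0..1}" for t
    using opnorm_segment_minus_one_le[of "A - 1\<^sub>m k" k t "1/3"]
      opnorm_segment_minus_one_le[of "B - 1\<^sub>m k" k t "1/3"] that A B nA nB
    unfolding At_def Bt_def by simp_all
  have nABt: "opnorm (At t * Bt t - 1\<^sub>m k) \<le> 7/9" if t: "t \<in> {0..1}" for t
  proof -
    have "opnorm (At t * Bt t - 1\<^sub>m k) \<le> opnorm (At t - 1\<^sub>m k) + opnorm (Bt t - 1\<^sub>m k)
        + opnorm (At t - 1\<^sub>m k) * opnorm (Bt t - 1\<^sub>m k)"
      by (rule opnorm_mult_minus_one_le[OF Atc Btc])
    also have "\<dots> \<le> 1/3 + 1/3 + 1/3 * (1/3)"
      using nAt[OF t] nBt[OF t] by (intro add_mono mult_mono) auto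
    finally show ?thesis by simp
  qed
  define f where "f t = mtrace (mlog (At t * Bt t)) - mtrace (mlog (At t)) - mtrace (mlog (Bt t))" for t
  have cA: "continuous_mat_on {0..1} k At" and cB: "continuous_mat_on {0..1} k Bt"
    unfolding At_def Bt_def using A B by (auto intro: continuous_mat_on_segment)
  have "continuous_on {0..1} f"
    unfolding f_def
    by (intro continuous_on_diff continuous_on_mtrace_mlog[OF continuous_mat_on_mult[OF cA cB], of "7/9"]
        continuous_on_mtrace_mlog[OF cA, of "1/3"] continuous_on_mtrace_mlog[OF cB, of "1/3"] nAt nBt nABt) auto
  moreover have "exp (f t) = 1" if "t \<in> {0..1}" for t
    unfolding f_def
    by (rule exp_mtrace_mlog_mult_diff[OF Atc Btc]) (use nAt[OF that] nBt[OF that] nABt[OF that] in auto)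
  ultimately have "f constant_on {0..1}" by (intro continuous_exp_eq_one_imp_constant) auto
  then have "f 1 = f 0" unfolding constant_on_def by force
  moreover have "At 0 = 1\<^sub>m k" "Bt 0 = 1\<^sub>m k" "At 1 = A" "Bt 1 = B"
    unfolding At_def Bt_def using A B by (auto intro!: eq_matI)
  ultimately show ?thesis unfolding f_def by (simp add: algebra_simps)
qed

lemma conj_minus_one: assumes U: "unitary_mat k U" and M: "M \<in> carrier_mat k k"
  shows "U * M * madj U - 1\<^sub>m k = U * (M - 1\<^sub>m k) * madj U"
proof -
  have c: "U \<in> carrier_mat k k" using U by (rule unitary_carrier)
  have "U * (M - 1\<^sub>m k) * madj U = U * M * madj U - U * madj U"
    using c M by (simp add: mult_minus_distrib_mat[of U k k M k]
        minus_mult_distrib_mat[of "U * M" k k U "madj U" k])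
  then show ?thesis using U by (simp add: unitary_mult_madj)
qed

lemma opnorm_conj_minus_one_le: assumes U: "unitary_mat k U" and M: "M \<in> carrier_mat k k"
  shows "opnorm (U * M * madj U - 1\<^sub>m k) \<le> opnorm (M - 1\<^sub>m k)"
proof -
  have c: "U \<in> carrier_mat k k" "madj U \<in> carrier_mat k k" "M - 1\<^sub>m k \<in> carrier_mat k k"
    using U M by (auto simp: unitary_carrier)
  have "opnorm (U * (M - 1\<^sub>m k) * madj U) \<le> opnorm (U * (M - 1\<^sub>m k)) * opnorm (madj U)"
    by (rule opnorm_mult) (use c in auto)
  also have "\<dots> \<le> opnorm U * opnorm (M - 1\<^sub>m k) * opnorm (madj U)"
    by (intro mult_right_mono opnorm_mult[OF c(1) c(3)]) auto
  also have "\<dots> \<le> 1 * opnorm (M - 1\<^sub>m k) * 1"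
    using unitary_opnorm_le[OF U] unitary_opnorm_le[OF unitary_madj[OF U]]
    by (intro mult_mono) auto
  finally show ?thesis using conj_minus_one[OF U M] by simp
qed

lemma mtrace_mlog_conj: assumes U: "unitary_mat k U" and M: "M \<in> carrier_mat k k"
  and small: "opnorm (M - 1\<^sub>m k) < 1"
  shows "mtrace (mlog (U * M * madj U)) = mtrace (mlog M)"
proof -
  have c: "U \<in> carrier_mat k k" using U by (rule unitary_carrier)
  have "similar_mat_wit (U * M * madj U - 1\<^sub>m k) (M - 1\<^sub>m k) U (madj U)"
    unfolding similar_mat_wit_def Let_def using c M U conj_minus_one[OF U M]
    by (auto simp: unitary_mult_madj unitary_madj_mult)
  then have "mtrace ((U * M * madj U - 1\<^sub>m k) ^\<^sub>m Suc n) = mtrace ((M - 1\<^sub>m k) ^\<^sub>m Suc n)" for n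
    by (rule mtrace_similar_mat_wit[OF similar_mat_wit_pow])
  moreover have "U * M * madj U \<in> carrier_mat k k"
    using c M by (simp add: mult_carrier_sq madj_carrier_sq)
  moreover have "opnorm (U * M * madj U - 1\<^sub>m k) < 1"
    using opnorm_conj_minus_one_le[OF U M] small by simp
  ultimately have "(\<lambda>n. log_coeff n * mtrace ((M - 1\<^sub>m k) ^\<^sub>m Suc n)) sums mtrace (mlog (U * M * madj U))"
    using mtrace_mlog_sums[of "U * M * madj U" k] by simp
  from sums_unique2[OF this mtrace_mlog_sums[OF M small]] show ?thesis .
qed

lemma opnorm_mult_madj_minus_one_le: assumes V: "unitary_mat k V" and P: "P \<in> carrier_mat k k"
  shows "opnorm (P * madj V - 1\<^sub>m k) \<le> opnorm (V - P)"
proof -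
  have c: "V \<in> carrier_mat k k" "madj V \<in> carrier_mat k k" using V by (auto simp: unitary_carrier)
  have "- ((V - P) * madj V) = P * madj V - V * madj V"
    using c P by (intro eq_matI) (auto simp: scalar_prod_def sum_subtractf left_diff_distrib)
  then have "opnorm (P * madj V - 1\<^sub>m k) \<le> opnorm ((V - P) * madj V)"
    using opnorm_uminus_le V by (metis unitary_mult_madj)
  also have "\<dots> \<le> opnorm (V - P) * opnorm (madj V)"
    by (rule opnorm_mult) (use c P in auto)
  also have "\<dots> \<le> opnorm (V - P)"
    using unitary_opnorm_le[OF unitary_madj[OF V]] by (simp add: mult_left_le)
  finally show ?thesis .
qed

lemma opnorm_madj_minus_one: assumes U: "unitary_mat k U"
  shows "opnorm (madj U - 1\<^sub>m k) \<le> opnorm (U - 1\<^sub>m k)"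
  using opnorm_mult_madj_minus_one_le[OF U one_carrier_mat] U
  by (simp add: left_mult_one_sq madj_carrier_sq unitary_carrier)

section \<open>Products of matrices near the identity\<close>

text \<open>\<open>near_id k \<delta> n P\<close> says that \<open>P\<close> is as close to the identity as a product of \<open>n\<close>
  factors at distance \<open>\<delta>\<close>; the multiplicative form of the bound makes \<open>near_id_mult\<close> exact.\<close>

definition near_id :: "nat \<Rightarrow> real \<Rightarrow> nat \<Rightarrow> complex mat \<Rightarrow> bool" where
  "near_id k \<delta> n P \<longleftrightarrow> P \<in> carrier_mat k k \<and> opnorm (P - 1\<^sub>m k) \<le> (1 + \<delta>) ^ n - 1"

lemma near_id_carrier: "near_id k \<delta> n P \<Longrightarrow> P \<in> carrier_mat k k"
  unfolding near_id_def by simp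

lemma near_id_one: "near_id k \<delta> 0 (1\<^sub>m k)"
proof -
  have z: "1\<^sub>m k - 1\<^sub>m k = (0\<^sub>m k k :: complex mat)" by (intro eq_matI) auto
  show ?thesis unfolding near_id_def z by simp
qed

lemma near_id_mult: assumes "0 \<le> \<delta>" "near_id k \<delta> n P" "near_id k \<delta> n' Q"
  shows "near_id k \<delta> (n + n') (P * Q)"
proof -
  let ?x = "(1 + \<delta>) ^ n" and ?y = "(1 + \<delta>) ^ n'"
  have c: "P \<in> carrier_mat k k" "Q \<in> carrier_mat k k"
    and e: "opnorm (P - 1\<^sub>m k) \<le> ?x - 1" "opnorm (Q - 1\<^sub>m k) \<le> ?y - 1"
    using assms by (auto simp: near_id_def)
  have "opnorm (P * Q - 1\<^sub>m k)
      \<le> opnorm (P - 1\<^sub>m k) + opnorm (Q - 1\<^sub>m k) + opnorm (P - 1\<^sub>m k) * opnorm (Q - 1\<^sub>m k)"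
    by (rule opnorm_mult_minus_one_le[OF c])
  also have "\<dots> \<le> (?x - 1) + (?y - 1) + (?x - 1) * (?y - 1)"
    using e opnorm_nonneg[of "P - 1\<^sub>m k"] opnorm_nonneg[of "Q - 1\<^sub>m k"]
    by (intro add_mono mult_mono) linarith+
  also have "\<dots> = (1 + \<delta>) ^ (n + n') - 1" by (simp add: algebra_simps power_add)
  finally show ?thesis unfolding near_id_def using c by simp
qed

lemma near_id_conj: assumes "unitary_mat k U" "near_id k \<delta> n P"
  shows "near_id k \<delta> n (U * P * madj U)"
  using opnorm_conj_minus_one_le[OF assms(1) near_id_carrier[OF assms(2)]] assms
  unfolding near_id_def by (auto simp: unitary_carrier intro!: mult_carrier_sq madj_carrier_sq)

lemma near_id_madj: assumes "unitary_mat k U" "near_id k \<delta> n U"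
  shows "near_id k \<delta> n (madj U)"
  using opnorm_madj_minus_one[OF assms(1)] assms unfolding near_id_def by auto

lemma opnorm_minus_one_le_if_near_id:
  assumes "near_id k \<delta> n P" "(1 + \<delta>) ^ n \<le> 4/3"
  shows "opnorm (P - 1\<^sub>m k) \<le> 1/3"
  using assms unfolding near_id_def by simp

lemma mtrace_mlog_mult_near_id:
  assumes "near_id k \<delta> n P" "near_id k \<delta> n' Q" "(1 + \<delta>) ^ n \<le> 4/3" "(1 + \<delta>) ^ n' \<le> 4/3"
  shows "mtrace (mlog (P * Q)) = mtrace (mlog P) + mtrace (mlog Q)"
  using assms
  by (intro mtrace_mlog_mult near_id_carrier opnorm_minus_one_le_if_near_id)

lemma mtrace_mlog_conj_near_id:
  assumes "unitary_mat k U" "near_id k \<delta> n P" "(1 + \<delta>) ^ n \<le> 4/3"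
  shows "mtrace (mlog (U * P * madj U)) = mtrace (mlog P)"
  using assms opnorm_minus_one_le_if_near_id[OF assms(2,3)]
  by (intro mtrace_mlog_conj near_id_carrier) auto

lemma one_plus_pow_le_four_thirds: assumes "0 \<le> d" "real N * d \<le> 1/4"
  shows "(1 + d) ^ N \<le> 4/3"
proof -
  have bernoulli: "(1 + d) ^ n * (1 - real n * d) \<le> 1" for n
  proof (induction n)
    case (Suc n)
    have "(1 + d) * (1 - real (Suc n) * d) \<le> 1 - real n * d"
      using assms by (simp add: algebra_simps)
    then have "(1 + d) ^ Suc n * (1 - real (Suc n) * d) \<le> (1 + d) ^ n * (1 - real n * d)"
      using assms by (simp add: mult.assoc mult_left_mono)
    then show ?case using Suc by simp
  qed simp
  have "(1 + d) ^ N * (3/4) \<le> (1 + d) ^ N * (1 - real N * d)"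
    using assms by (intro mult_left_mono) auto
  then show ?thesis using bernoulli[of N] by simp
qed
section \<open>Pairing chains with functions on pairs\<close>

lemma sum_delta_mult:
  assumes "finite T" "p \<in> T"
  shows "(\<Sum>q\<in>T. of_int (if p = q then v else 0) * f q) = of_int v * (f p :: complex)"
proof -
  have "(\<Sum>q\<in>T. of_int (if p = q then v else 0) * f q) = (\<Sum>q\<in>T. if p = q then of_int v * f q else 0)"
    by (intro sum.cong) auto
  then show ?thesis using assms by simp
qed

lemma sum_ind_mult:
  assumes "finite T" "p \<in> T"
  shows "(\<Sum>q\<in>T. of_int (ind (p = q)) * f q) = (f p :: complex)"
  using sum_delta_mult[OF assms, of 1 f] unfolding ind_def by simp

lemma sum_delta_sum_mult:
  assumes "finite T" "finite L" "\<And>l. l \<in> L \<Longrightarrow> p l \<in> T"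
  shows "(\<Sum>q\<in>T. of_int (\<Sum>l\<in>L. if p l = q then w l else 0) * f q) = (\<Sum>l\<in>L. of_int (w l) * (f (p l) :: complex))"
proof -
  have "(\<Sum>q\<in>T. of_int (\<Sum>l\<in>L. if p l = q then w l else 0) * f q)
      = (\<Sum>l\<in>L. \<Sum>q\<in>T. of_int (if p l = q then w l else 0) * f q)"
    by (simp add: sum_distrib_right sum.swap[of _ T])
  also have "\<dots> = (\<Sum>l\<in>L. of_int (w l) * f (p l))"
    using assms by (intro sum.cong refl sum_delta_mult) auto
  finally show ?thesis .
qed

lemma sum_formal_sum2_mult:
  assumes "finite T" "\<And>j. j < m \<Longrightarrow> (x j, y j) \<in> T"
  shows "(\<Sum>q\<in>T. of_int (formal_sum2 m c x y q) * f q) = (\<Sum>j<m. of_int (c j) * (f (x j, y j) :: complex))"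
  unfolding formal_sum2_def using assms by (intro sum_delta_sum_mult) auto

lemma sum_hopf_cycle_mult:
  fixes f :: "'g \<times> 'g \<Rightarrow> complex"
  assumes T: "finite T"
    and "\<And>l. l < 4 * g \<Longrightarrow> (prefix_prod G a b l, letter G a b l) \<in> T"
    and "\<And>i. i < g \<Longrightarrow> (a i, inv\<^bsub>G\<^esub> (a i)) \<in> T"
    and "\<And>i. i < g \<Longrightarrow> (b i, inv\<^bsub>G\<^esub> (b i)) \<in> T"
    and "(\<one>\<^bsub>G\<^esub>, \<one>\<^bsub>G\<^esub>) \<in> T"
    and "f (\<one>\<^bsub>G\<^esub>, \<one>\<^bsub>G\<^esub>) = 0"
  shows "(\<Sum>q\<in>T. of_int (hopf_cycle G g a b q) * f q) =
    (\<Sum>l<4 * g. f (prefix_prod G a b l, letter G a b l))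
    - (\<Sum>i<g. f (a i, inv\<^bsub>G\<^esub> (a i)) + f (b i, inv\<^bsub>G\<^esub> (b i)))"
proof -
  define P :: "'g \<times> 'g \<Rightarrow> int" where "P q = (\<Sum>l<4*g. if (prefix_prod G a b l, letter G a b l) = q then 1 else 0)" for q
  define A :: "'g \<times> 'g \<Rightarrow> int" where "A q = (\<Sum>i<g. if (a i, inv\<^bsub>G\<^esub> (a i)) = q then 1 else 0)" for q
  define B :: "'g \<times> 'g \<Rightarrow> int" where "B q = (\<Sum>i<g. if (b i, inv\<^bsub>G\<^esub> (b i)) = q then 1 else 0)" for q
  define C :: "'g \<times> 'g \<Rightarrow> int" where "C q = (if (\<one>\<^bsub>G\<^esub>, \<one>\<^bsub>G\<^esub>) = q then 2 * int g else 0)" for q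
  have "hopf_cycle G g a b q = P q - A q - B q - C q" for q
    unfolding hopf_cycle_def P_def A_def B_def C_def ind_def by (auto simp: sum.distrib)
  then have "(\<Sum>q\<in>T. of_int (hopf_cycle G g a b q) * f q)
      = (\<Sum>q\<in>T. of_int (P q) * f q) - (\<Sum>q\<in>T. of_int (A q) * f q)
        - (\<Sum>q\<in>T. of_int (B q) * f q) - (\<Sum>q\<in>T. of_int (C q) * f q)"
    by (simp add: sum_subtractf left_diff_distrib)
  also have "\<dots> = (\<Sum>l<4 * g. f (prefix_prod G a b l, letter G a b l))
      - (\<Sum>i<g. f (a i, inv\<^bsub>G\<^esub> (a i))) - (\<Sum>i<g. f (b i, inv\<^bsub>G\<^esub> (b i)))"
    unfolding P_def A_def B_def C_def using assms
    by (subst (1 2 3) sum_delta_sum_mult) (auto simp: sum_delta_mult)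
  finally show ?thesis by (simp add: sum.distrib)
qed

lemma sum_bd3_mult:
  fixes f :: "'g \<times> 'g \<Rightarrow> complex"
  assumes T: "finite T" and H: "finite {t. h t \<noteq> 0}"
    and P: "\<And>u v w. h (u,v,w) \<noteq> 0 \<Longrightarrow>
      (v,w) \<in> T \<and> (u \<otimes>\<^bsub>G\<^esub> v, w) \<in> T \<and> (u, v \<otimes>\<^bsub>G\<^esub> w) \<in> T \<and> (u,v) \<in> T"
  shows "(\<Sum>q\<in>T. of_int (bd3 G h q) * f q) =
    (\<Sum>(u,v,w)\<in>{t. h t \<noteq> 0}. of_int (h (u,v,w)) *
        (f (v,w) - f (u \<otimes>\<^bsub>G\<^esub> v, w) + f (u, v \<otimes>\<^bsub>G\<^esub> w) - f (u,v)))"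
proof -
  define e where "e t q = (case t of (u,v,w) \<Rightarrow> ind ((v,w) = q) - ind ((u \<otimes>\<^bsub>G\<^esub> v, w) = q)
    + ind ((u, v \<otimes>\<^bsub>G\<^esub> w) = q) - ind ((u,v) = q))" for t q
  have "(\<Sum>q\<in>T. of_int (bd3 G h q) * f q)
      = (\<Sum>t\<in>{t. h t \<noteq> 0}. of_int (h t) * (\<Sum>q\<in>T. of_int (e t q) * f q))"
    unfolding bd3_def e_def
    by (simp add: sum_distrib_right sum_distrib_left mult.assoc sum.swap[of _ T])
  also have "\<dots> = (\<Sum>(u,v,w)\<in>{t. h t \<noteq> 0}. of_int (h (u,v,w)) *
        (f (v,w) - f (u \<otimes>\<^bsub>G\<^esub> v, w) + f (u, v \<otimes>\<^bsub>G\<^esub> w) - f (u,v)))"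
  proof (intro sum.cong refl, clarify)
    fix u v w assume "h (u,v,w) \<noteq> 0"
    then have p: "(v,w) \<in> T" "(u \<otimes>\<^bsub>G\<^esub> v, w) \<in> T" "(u, v \<otimes>\<^bsub>G\<^esub> w) \<in> T" "(u,v) \<in> T"
      using P by auto
    have "(\<Sum>q\<in>T. of_int (e (u,v,w) q) * f q) =
        (\<Sum>q\<in>T. of_int (ind ((v,w) = q)) * f q) - (\<Sum>q\<in>T. of_int (ind ((u \<otimes>\<^bsub>G\<^esub> v, w) = q)) * f q)
        + (\<Sum>q\<in>T. of_int (ind ((u, v \<otimes>\<^bsub>G\<^esub> w) = q)) * f q) - (\<Sum>q\<in>T. of_int (ind ((u,v) = q)) * f q)"
      unfolding e_def by (simp add: sum_subtractf sum.distrib algebra_simps)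
    then show "of_int (h (u,v,w)) * (\<Sum>q\<in>T. of_int (e (u,v,w) q) * f q) = of_int (h (u,v,w)) *
        (f (v,w) - f (u \<otimes>\<^bsub>G\<^esub> v, w) + f (u, v \<otimes>\<^bsub>G\<^esub> w) - f (u,v))"
      by (simp only: sum_ind_mult[OF T p(1)] sum_ind_mult[OF T p(2)] sum_ind_mult[OF T p(3)]
          sum_ind_mult[OF T p(4)])
  qed
  finally show ?thesis .
qed

section \<open>The commutator word\<close>

definition hopf_elements :: "('g,'c) monoid_scheme \<Rightarrow> nat \<Rightarrow> (nat \<Rightarrow> 'g) \<Rightarrow> (nat \<Rightarrow> 'g) \<Rightarrow> 'g set" where
  "hopf_elements G g a b = prefix_prod G a b ` {..<4 * g} \<union> letter G a b ` {..<4 * g}"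

definition chain3_elements :: "('g,'c) monoid_scheme \<Rightarrow> ('g \<times> 'g \<times> 'g \<Rightarrow> int) \<Rightarrow> 'g set" where
  "chain3_elements G h = (\<Union>(u,v,w)\<in>{t. h t \<noteq> 0}. {u, v, w, u \<otimes>\<^bsub>G\<^esub> v, v \<otimes>\<^bsub>G\<^esub> w})"

lemma finite_hopf_elements: "finite (hopf_elements G g a b)"
  unfolding hopf_elements_def by simp

lemma finite_chain3_elements: "finite {t. h t \<noteq> 0} \<Longrightarrow> finite (chain3_elements G h)"
  unfolding chain3_elements_def by auto

lemma (in group) chain3_elements_subset:
  "fin_chain (carrier G \<times> carrier G \<times> carrier G) h \<Longrightarrow> chain3_elements G h \<subseteq> carrier G"
  unfolding chain3_elements_def fin_chain_def by auto

locale commutator_word = group G for G :: "'g monoid" (structure) +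
  fixes g :: nat and a b :: "nat \<Rightarrow> 'g"
  assumes a_carrier: "\<And>i. i < g \<Longrightarrow> a i \<in> carrier G"
    and b_carrier: "\<And>i. i < g \<Longrightarrow> b i \<in> carrier G"
begin

lemma letter_simps:
  "letter G a b (4 * i) = a i"
  "letter G a b (Suc (4 * i)) = b i"
  "letter G a b (Suc (Suc (4 * i))) = inv (a i)"
  "letter G a b (Suc (Suc (Suc (4 * i)))) = inv (b i)"
proof -
  have "Suc (4 * i) div 4 = i" "Suc (4 * i) mod 4 = 1"
    "Suc (Suc (4 * i)) div 4 = i" "Suc (Suc (4 * i)) mod 4 = 2"
    "Suc (Suc (Suc (4 * i))) div 4 = i" "Suc (Suc (Suc (4 * i))) mod 4 = 3" by presburger+
  then show "letter G a b (4 * i) = a i" "letter G a b (Suc (4 * i)) = b i"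
    "letter G a b (Suc (Suc (4 * i))) = inv (a i)" "letter G a b (Suc (Suc (Suc (4 * i)))) = inv (b i)"
    unfolding letter_def Let_def by simp_all
qed

lemma letter_carrier: "l < 4 * g \<Longrightarrow> letter G a b l \<in> carrier G"
  unfolding letter_def Let_def using a_carrier b_carrier by auto

lemma prefix_prod_carrier: "l \<le> 4 * g \<Longrightarrow> prefix_prod G a b l \<in> carrier G"
  by (induction l) (auto simp: letter_carrier)

lemma prefix_prod_four: "i \<le> g \<Longrightarrow> prefix_prod G a b (4 * i) = gcomm_prod G a b i"
proof (induction i)
  case (Suc i)
  have "prefix_prod G a b (4 * Suc i) = prefix_prod G a b (Suc (Suc (Suc (Suc (4 * i)))))"
    by (simp add: numeral_eq_Suc)
  also have "\<dots> = gcomm_prod G a b i \<otimes> (a i \<otimes> b i \<otimes> inv (a i) \<otimes> inv (b i))"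
    using Suc a_carrier b_carrier prefix_prod_carrier[of "4 * i"] by (simp add: letter_simps m_assoc)
  finally show ?case by (simp add: gcomm_def)
qed simp

lemma hopf_elements_subset: "hopf_elements G g a b \<subseteq> carrier G"
  unfolding hopf_elements_def using letter_carrier prefix_prod_carrier by auto

lemma generators_mem_hopf_elements:
  assumes "i < g"
  shows "a i \<in> hopf_elements G g a b" "b i \<in> hopf_elements G g a b"
    "inv (a i) \<in> hopf_elements G g a b" "inv (b i) \<in> hopf_elements G g a b"
proof -
  have "4 * i < 4 * g" "Suc (4 * i) < 4 * g" "Suc (Suc (4 * i)) < 4 * g" "Suc (Suc (Suc (4 * i))) < 4 * g"
    using assms by auto
  then show "a i \<in> hopf_elements G g a b" "b i \<in> hopf_elements G g a b"
    "inv (a i) \<in> hopf_elements G g a b" "inv (b i) \<in> hopf_elements G g a b"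
    unfolding hopf_elements_def by (metis UnI2 imageI lessThan_iff letter_simps)+
qed

end
section \<open>The trace-log cocycle of an almost representation\<close>

fun mprod :: "nat \<Rightarrow> (nat \<Rightarrow> complex mat) \<Rightarrow> nat \<Rightarrow> complex mat" where
  "mprod k R 0 = 1\<^sub>m k"
| "mprod k R (Suc L) = mprod k R L * R L"

lemma mprod_unitary: "(\<And>l. l < L \<Longrightarrow> unitary_mat k (R l)) \<Longrightarrow> unitary_mat k (mprod k R L)"
  by (induction L) (auto intro: unitary_mult unitary_one)

lemma mcomm_unitary: "unitary_mat k A \<Longrightarrow> unitary_mat k B \<Longrightarrow> unitary_mat k (mcomm A B)"
  unfolding mcomm_def by (intro unitary_mult unitary_madj)

locale approx_unitary_rep = group G for G :: "'g monoid" (structure) +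
  fixes k :: nat and \<rho> :: "'g \<Rightarrow> complex mat" and S :: "'g set" and \<delta> :: real
  assumes unitary_rep: "\<And>x. x \<in> carrier G \<Longrightarrow> unitary_mat k (\<rho> x)"
    and rep_one: "\<rho> \<one> = 1\<^sub>m k"
    and S_subset: "S \<subseteq> carrier G"
    and delta_nonneg: "0 \<le> \<delta>"
    and delta_le: "\<delta> \<le> 1/3"
    and rep_mult_defect: "\<And>s t. s \<in> S \<Longrightarrow> t \<in> S \<Longrightarrow> opnorm (\<rho> (s \<otimes> t) - \<rho> s * \<rho> t) < \<delta>"
begin

lemma rep_carrier[simp]: "x \<in> carrier G \<Longrightarrow> \<rho> x \<in> carrier_mat k k"
  using unitary_rep unitary_carrier by blast

lemmas rep_mat_simps =
  assoc_mult_sq[where k = k] mult_carrier_sq[where k = k] madj_carrier_sq[where k = k] madj_mult_sq[where k = k]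
  left_mult_one_sq[where k = k] right_mult_one_sq[where k = k] unitary_madj_mult[where k = k]
  unitary_mult_madj[where k = k] unitary_madj_mult_cancel[where k = k] unitary_mult_madj_cancel[where k = k]
  one_carrier_mat m_assoc rep_one unitary_rep

definition defect :: "'g \<Rightarrow> 'g \<Rightarrow> complex mat" where
  "defect x y = \<rho> x * \<rho> y * madj (\<rho> (x \<otimes> y))"

definition omega :: "'g \<Rightarrow> 'g \<Rightarrow> complex" where
  "omega x y = mtrace (mlog (defect x y))"

lemma one_plus_delta_le: "(1 + \<delta>) ^ 1 \<le> 4/3"
  using delta_le by simp

lemma defect_near_id: assumes "x \<in> S" "y \<in> S" shows "near_id k \<delta> 1 (defect x y)"
proof -
  have xy: "x \<in> carrier G" "y \<in> carrier G" using assms S_subset by auto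
  have "opnorm (defect x y - 1\<^sub>m k) \<le> opnorm (\<rho> (x \<otimes> y) - \<rho> x * \<rho> y)"
    unfolding defect_def using xy
    by (intro opnorm_mult_madj_minus_one_le unitary_rep mult_carrier_sq rep_carrier) auto
  also have "\<dots> \<le> (1 + \<delta>) ^ 1 - 1" using rep_mult_defect[OF assms] by simp
  finally show ?thesis unfolding near_id_def defect_def using xy by (simp add: rep_mat_simps)
qed

text \<open>The cocycle identity comes from the matrix identity
  \<open>D(x,y) D(xy,z) = \<rho>(x) D(y,z) \<rho>(x)\<^sup>* D(x,yz)\<close> for \<open>D = defect\<close>.\<close>

lemma omega_cocycle:
  assumes S: "x \<in> S" "y \<in> S" "z \<in> S" "x \<otimes> y \<in> S" "y \<otimes> z \<in> S"
  shows "omega x y + omega (x \<otimes> y) z = omega y z + omega x (y \<otimes> z)"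
proof -
  have G: "x \<in> carrier G" "y \<in> carrier G" "z \<in> carrier G" using S S_subset by auto
  have eq: "defect x y * defect (x \<otimes> y) z = (\<rho> x * defect y z * madj (\<rho> x)) * defect x (y \<otimes> z)"
    unfolding defect_def using G by (simp add: rep_mat_simps)
  have "omega x y + omega (x \<otimes> y) z = mtrace (mlog (defect x y * defect (x \<otimes> y) z))"
    unfolding omega_def using S
    by (intro mtrace_mlog_mult_near_id[OF defect_near_id defect_near_id one_plus_delta_le
          one_plus_delta_le, symmetric])
  also have "\<dots> = mtrace (mlog (\<rho> x * defect y z * madj (\<rho> x))) + omega x (y \<otimes> z)"
    unfolding eq omega_def
    by (rule mtrace_mlog_mult_near_id[OF near_id_conj[OF unitary_rep defect_near_id] defect_near_id
          one_plus_delta_le one_plus_delta_le]) (use S G in auto)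
  also have "mtrace (mlog (\<rho> x * defect y z * madj (\<rho> x))) = omega y z"
    unfolding omega_def
    by (rule mtrace_mlog_conj_near_id[OF unitary_rep defect_near_id one_plus_delta_le]) (use S G in auto)
  finally show ?thesis .
qed

text \<open>Appending one commutator \<open>[\<rho> x, \<rho> y]\<close> to \<open>Z\<close> and the four letters
  \<open>x, y, x\<^sup>-\<^sup>1, y\<^sup>-\<^sup>1\<close> to \<open>Y\<close>: the unitaries cancel up to the two defects, of which
  the first appears conjugated.\<close>

lemma madj_mult_mcomm_eq:
  assumes "x \<in> carrier G" "y \<in> carrier G" "Z \<in> carrier_mat k k" "Y \<in> carrier_mat k k"
  shows "madj (Z * mcomm (\<rho> x) (\<rho> y)) * (Y * \<rho> x * \<rho> y * \<rho> (inv x) * \<rho> (inv y))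
    = madj (mcomm (\<rho> x) (\<rho> y))
      * (madj Z * Y * ((\<rho> x * \<rho> y * madj (\<rho> x)) * defect x (inv x) * madj (\<rho> x * \<rho> y * madj (\<rho> x))))
      * madj (madj (mcomm (\<rho> x) (\<rho> y))) * defect y (inv y)"
  using assms unfolding mcomm_def defect_def by (simp add: rep_mat_simps)

lemma omega_one_one: "omega \<one> \<one> = 0"
  unfolding omega_def defect_def by (simp add: rep_one)

lemma sum_bd3_omega:
  assumes "finite T" "finite {t. h t \<noteq> 0}" "chain3_elements G h \<subseteq> S"
    and "\<And>u v w. h (u,v,w) \<noteq> 0 \<Longrightarrow>
      (v,w) \<in> T \<and> (u \<otimes> v, w) \<in> T \<and> (u, v \<otimes> w) \<in> T \<and> (u,v) \<in> T"
  shows "(\<Sum>q\<in>T. of_int (bd3 G h q) * case_prod omega q) = 0"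
proof -
  have zero: "omega v w - omega (u \<otimes> v) w + omega u (v \<otimes> w) - omega u v = 0"
    if "h (u,v,w) \<noteq> 0" for u v w
  proof -
    have "{u, v, w, u \<otimes> v, v \<otimes> w} \<subseteq> S"
      using assms(3) that unfolding chain3_elements_def by blast
    then have "omega u v + omega (u \<otimes> v) w = omega v w + omega u (v \<otimes> w)"
      by (intro omega_cocycle) auto
    then show ?thesis by (simp add: algebra_simps)
  qed
  have "(\<Sum>q\<in>T. of_int (bd3 G h q) * case_prod omega q) = (\<Sum>(u,v,w)\<in>{t. h t \<noteq> 0}.
      of_int (h (u,v,w)) * (omega v w - omega (u \<otimes> v) w + omega u (v \<otimes> w) - omega u v))"
    using sum_bd3_mult[OF assms(1,2,4), of "case_prod omega"] by simp
  also have "\<dots> = 0" using zero by (intro sum.neutral) auto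
  finally show ?thesis .
qed

end

locale hopf_rep = approx_unitary_rep G k \<rho> S \<delta> + commutator_word G g a b
  for G :: "'g monoid" (structure) and k \<rho> S \<delta> g a b +
  assumes hopf_elements_subset_S: "hopf_elements G g a b \<subseteq> S"
    and delta_pow_le: "(1 + \<delta>) ^ (6 * g) \<le> 4/3"
begin

abbreviation letter_rep_prod :: "nat \<Rightarrow> complex mat" where
  "letter_rep_prod L \<equiv> mprod k (\<lambda>l. \<rho> (letter G a b l)) L"

lemma delta_pow_le_of_le: "n \<le> 6 * g \<Longrightarrow> (1 + \<delta>) ^ n \<le> 4/3"
  using delta_pow_le power_increasing[of n "6 * g" "1 + \<delta>"] delta_nonneg by simp

lemma letter_rep_prod_unitary: "L \<le> 4 * g \<Longrightarrow> unitary_mat k (letter_rep_prod L)"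
  by (intro mprod_unitary unitary_rep letter_carrier) simp

lemma mcomm_prod_unitary: "i \<le> g \<Longrightarrow> unitary_mat k (mcomm_prod k \<rho> a b i)"
  by (induction i) (auto intro!: unitary_mult unitary_one mcomm_unitary unitary_rep a_carrier b_carrier)

lemma letter_rep_prod_telescope:
  "L \<le> 4 * g \<Longrightarrow>
    near_id k \<delta> L (letter_rep_prod L * madj (\<rho> (prefix_prod G a b L))) \<and>
    mtrace (mlog (letter_rep_prod L * madj (\<rho> (prefix_prod G a b L))))
      = (\<Sum>l<L. omega (prefix_prod G a b l) (letter G a b l))"
proof (induction L)
  case 0
  then show ?case using near_id_one[of k \<delta>] by (simp add: rep_one)
next
  case (Suc L)
  let ?p = "prefix_prod G a b L" and ?w = "letter G a b L"
  define X where "X = letter_rep_prod L * madj (\<rho> ?p)"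
  have L: "L < 4 * g" using Suc by simp
  have IH: "near_id k \<delta> L X" "mtrace (mlog X) = (\<Sum>l<L. omega (prefix_prod G a b l) (letter G a b l))"
    using Suc X_def by auto
  have "letter_rep_prod (Suc L) * madj (\<rho> (prefix_prod G a b (Suc L))) = X * defect ?p ?w"
    unfolding X_def defect_def using L prefix_prod_carrier[of L] letter_carrier[of L]
      unitary_carrier[OF letter_rep_prod_unitary[of L]] by (simp add: rep_mat_simps)
  moreover have D: "near_id k \<delta> 1 (defect ?p ?w)"
    using L hopf_elements_subset_S unfolding hopf_elements_def by (intro defect_near_id) auto
  ultimately show ?case
    using near_id_mult[OF delta_nonneg IH(1) D] IH(2) L
      mtrace_mlog_mult_near_id[OF IH(1) D delta_pow_le_of_le one_plus_delta_le]
    by (simp add: omega_def)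
qed

lemma mcomm_prod_vs_letters_Suc:
  fixes i :: nat
  defines "F \<equiv> madj (mcomm_prod k \<rho> a b i) * letter_rep_prod (4 * i)"
  assumes i: "i < g" and IH: "near_id k \<delta> (2 * i) F"
  shows "near_id k \<delta> (2 * Suc i) (madj (mcomm_prod k \<rho> a b (Suc i)) * letter_rep_prod (4 * Suc i)) \<and>
    mtrace (mlog (madj (mcomm_prod k \<rho> a b (Suc i)) * letter_rep_prod (4 * Suc i)))
      = mtrace (mlog F) + omega (a i) (inv (a i)) + omega (b i) (inv (b i))"
proof -
  have G: "a i \<in> carrier G" "b i \<in> carrier G" using i a_carrier b_carrier by auto
  define A where "A = \<rho> (a i)"
  define B where "B = \<rho> (b i)"
  define K where "K = mcomm A B"
  define C where "C = A * B * madj A"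
  have u: "unitary_mat k K" "unitary_mat k C"
    using G unfolding A_def B_def K_def C_def by (auto intro!: unitary_mult unitary_madj mcomm_unitary unitary_rep)
  define M where "M = madj K * (F * (C * defect (a i) (inv (a i)) * madj C)) * madj (madj K)"
  have "4 * Suc i = Suc (Suc (Suc (Suc (4 * i))))" by simp
  then have "letter_rep_prod (4 * Suc i) = letter_rep_prod (4 * i) * A * B * \<rho> (inv (a i)) * \<rho> (inv (b i))"
    unfolding A_def B_def by (simp only: mprod.simps letter_simps)
  then have eq: "madj (mcomm_prod k \<rho> a b (Suc i)) * letter_rep_prod (4 * Suc i) = M * defect (b i) (inv (b i))"
    unfolding M_def F_def C_def K_def A_def B_def
    using madj_mult_mcomm_eq[OF G unitary_carrier[OF mcomm_prod_unitary[of i]]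
        unitary_carrier[OF letter_rep_prod_unitary[of "4 * i"]]] i
    by simp
  have S: "a i \<in> S" "b i \<in> S" "inv (a i) \<in> S" "inv (b i) \<in> S"
    using generators_mem_hopf_elements[OF i] hopf_elements_subset_S by auto
  have E: "near_id k \<delta> 1 (defect (a i) (inv (a i)))" "near_id k \<delta> 1 (defect (b i) (inv (b i)))"
    by (rule defect_near_id[OF S(1) S(3)], rule defect_near_id[OF S(2) S(4)])
  have b: "(1 + \<delta>) ^ (2 * i) \<le> 4/3" "(1 + \<delta>) ^ (2 * i + 1) \<le> 4/3"
    by (rule delta_pow_le_of_le, use i in simp)+
  have n1: "near_id k \<delta> 1 (C * defect (a i) (inv (a i)) * madj C)" by (rule near_id_conj[OF u(2) E(1)])
  have n2: "near_id k \<delta> (2 * i + 1) (F * (C * defect (a i) (inv (a i)) * madj C))"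
    by (rule near_id_mult[OF delta_nonneg IH n1])
  have nM: "near_id k \<delta> (2 * i + 1) M"
    unfolding M_def by (rule near_id_conj[OF unitary_madj[OF u(1)] n2])
  have "mtrace (mlog M) = mtrace (mlog F) + omega (a i) (inv (a i))"
    unfolding M_def omega_def
    using mtrace_mlog_conj_near_id[OF unitary_madj[OF u(1)] n2 b(2)]
      mtrace_mlog_mult_near_id[OF IH n1 b(1) one_plus_delta_le]
      mtrace_mlog_conj_near_id[OF u(2) E(1) one_plus_delta_le] by simp
  then show ?thesis
    unfolding eq using near_id_mult[OF delta_nonneg nM E(2)]
      mtrace_mlog_mult_near_id[OF nM E(2) b(2) one_plus_delta_le]
    by (simp add: omega_def)
qed

lemma mcomm_prod_vs_letters:
  "i \<le> g \<Longrightarrow>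
    near_id k \<delta> (2 * i) (madj (mcomm_prod k \<rho> a b i) * letter_rep_prod (4 * i)) \<and>
    mtrace (mlog (madj (mcomm_prod k \<rho> a b i) * letter_rep_prod (4 * i)))
      = (\<Sum>j<i. omega (a j) (inv (a j)) + omega (b j) (inv (b j)))"
proof (induction i)
  case 0
  then show ?case using near_id_one[of k \<delta>] by simp
next
  case (Suc i)
  then show ?case using mcomm_prod_vs_letters_Suc[of i] by (simp add: add.assoc)
qed

text \<open>With \<open>Y\<close> the product of the letters and \<open>Z\<close> that of the commutators, \<open>Y = Z F\<close> for the
  matrix \<open>F\<close> of \<open>mcomm_prod_vs_letters\<close>; since the relation makes the last prefix trivial,
  \<open>Y\<close> is near the identity, and so is \<open>Z = Y F\<^sup>*\<close>, a product of \<open>6 g\<close> factors.\<close>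

lemma mtrace_mlog_mcomm_prod:
  assumes rel: "gcomm_prod G a b g = \<one>"
  shows "mtrace (mlog (mcomm_prod k \<rho> a b g)) =
    (\<Sum>l<4 * g. omega (prefix_prod G a b l) (letter G a b l))
    - (\<Sum>i<g. omega (a i) (inv (a i)) + omega (b i) (inv (b i)))"
proof -
  define Y where "Y = letter_rep_prod (4 * g)"
  define Z where "Z = mcomm_prod k \<rho> a b g"
  define F where "F = madj Z * Y"
  have u: "unitary_mat k Y" "unitary_mat k Z"
    unfolding Y_def Z_def by (auto intro: letter_rep_prod_unitary mcomm_prod_unitary)
  have "prefix_prod G a b (4 * g) = \<one>" using prefix_prod_four[of g] rel by simp
  then have "letter_rep_prod (4 * g) * madj (\<rho> (prefix_prod G a b (4 * g))) = Y"
    using unitary_carrier[OF u(1)] unfolding Y_def by (simp add: rep_mat_simps)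
  then have Y: "near_id k \<delta> (4 * g) Y"
    "mtrace (mlog Y) = (\<Sum>l<4 * g. omega (prefix_prod G a b l) (letter G a b l))"
    using letter_rep_prod_telescope[of "4 * g"] by auto
  have F: "near_id k \<delta> (2 * g) F" "mtrace (mlog F) = (\<Sum>i<g. omega (a i) (inv (a i)) + omega (b i) (inv (b i)))"
    using mcomm_prod_vs_letters[of g] unfolding F_def Z_def Y_def by auto
  have "unitary_mat k F" unfolding F_def using u by (intro unitary_mult unitary_madj)
  moreover have "Z = Y * madj F" "Y = Z * F"
    unfolding F_def using u unitary_carrier[OF u(1)] unitary_carrier[OF u(2)] by (simp_all add: rep_mat_simps)
  ultimately have "near_id k \<delta> (4 * g + 2 * g) Z"
    using near_id_mult[OF delta_nonneg Y(1) near_id_madj[OF _ F(1)]] by simp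
  then have "mtrace (mlog Y) = mtrace (mlog Z) + mtrace (mlog F)"
    using \<open>Y = Z * F\<close> F(1) delta_pow_le_of_le
    by (simp add: mtrace_mlog_mult_near_id)
  then show ?thesis using Y(2) F(2) unfolding Z_def by simp
qed

lemma mtrace_mlog_mcomm_prod_eq_pairing:
  assumes rel: "gcomm_prod G a b g = \<one>"
    and cyc: "\<And>q. formal_sum2 m c x y q - hopf_cycle G g a b q = bd3 G h q"
    and h: "finite {t. h t \<noteq> 0}" "chain3_elements G h \<subseteq> S"
  shows "mtrace (mlog (mcomm_prod k \<rho> a b g)) = (\<Sum>j<m. of_int (c j) * omega (x j) (y j))"
proof -
  let ?f = "case_prod omega"
  define bd3_pairs where "bd3_pairs t = (case t of (u,v,w) \<Rightarrow> {(v,w), (u \<otimes> v, w), (u, v \<otimes> w), (u,v)})" for t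
  define T where "T = (\<lambda>j. (x j, y j)) ` {..<m}
    \<union> (\<lambda>l. (prefix_prod G a b l, letter G a b l)) ` {..<4 * g}
    \<union> (\<lambda>i. (a i, inv (a i))) ` {..<g} \<union> (\<lambda>i. (b i, inv (b i))) ` {..<g} \<union> {(\<one>, \<one>)}
    \<union> \<Union> (bd3_pairs ` {t. h t \<noteq> 0})"
  have T: "finite T" unfolding T_def bd3_pairs_def using h(1) by (auto split: prod.split)
  have "(\<Sum>q\<in>T. of_int (formal_sum2 m c x y q) * ?f q)
      = (\<Sum>q\<in>T. of_int (hopf_cycle G g a b q) * ?f q) + (\<Sum>q\<in>T. of_int (bd3 G h q) * ?f q)"
  proof -
    have "formal_sum2 m c x y q = hopf_cycle G g a b q + bd3 G h q" for q using cyc[of q] by simp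
    then show ?thesis by (simp add: sum.distrib distrib_right)
  qed
  moreover have "(\<Sum>q\<in>T. of_int (bd3 G h q) * ?f q) = 0"
  proof (intro sum_bd3_omega T h)
    fix u v w assume "h (u,v,w) \<noteq> 0"
    then have "bd3_pairs (u,v,w) \<subseteq> T" unfolding T_def by blast
    then show "(v,w) \<in> T \<and> (u \<otimes> v, w) \<in> T \<and> (u, v \<otimes> w) \<in> T \<and> (u,v) \<in> T"
      unfolding bd3_pairs_def by auto
  qed
  moreover have "(\<Sum>q\<in>T. of_int (formal_sum2 m c x y q) * ?f q) = (\<Sum>j<m. of_int (c j) * omega (x j) (y j))"
    using sum_formal_sum2_mult[OF T, of m x y c ?f] unfolding T_def by simp
  moreover have "(\<Sum>q\<in>T. of_int (hopf_cycle G g a b q) * ?f q) = mtrace (mlog (mcomm_prod k \<rho> a b g))"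
    using sum_hopf_cycle_mult[OF T, of g G a b ?f] omega_one_one mtrace_mlog_mcomm_prod[OF rel]
    unfolding T_def by simp
  ultimately show ?thesis by simp
qed

end

theorem proposition3p3:
  fixes G :: "'g monoid" and g m :: nat and a b :: "nat \<Rightarrow> 'g"
    and c :: "nat \<Rightarrow> int" and x y :: "nat \<Rightarrow> 'g"
  assumes "group G" and "countable (carrier G)"
    and "\<And>i. i < g \<Longrightarrow> a i \<in> carrier G" and "\<And>i. i < g \<Longrightarrow> b i \<in> carrier G"
    and "gcomm_prod G a b g = \<one>\<^bsub>G\<^esub>"
    and "\<And>j. j < m \<Longrightarrow> x j \<in> carrier G" and "\<And>j. j < m \<Longrightarrow> y j \<in> carrier G"
    and "is_2cycle G (formal_sum2 m c x y)"
    and "homologous2 G (formal_sum2 m c x y) (hopf_cycle G g a b)"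
  shows "\<exists>S \<delta>. finite S \<and> S \<subseteq> carrier G \<and> \<delta> > 0 \<and>
     (\<forall>k \<rho>. Sdelta_rep G S \<delta> k \<rho> \<longrightarrow>
        (1 / (2 * pi * \<i>)) * mtrace (mlog (mcomm_prod k \<rho> a b g)) =
        (1 / (2 * pi * \<i>)) * (\<Sum>j<m. of_int (c j) *
           mtrace (mlog (\<rho> (x j) * \<rho> (y j) * madj (\<rho> (x j \<otimes>\<^bsub>G\<^esub> y j))))))"
proof -
  interpret commutator_word G g a b
    using assms(1,3,4) by (simp add: commutator_word_def commutator_word_axioms_def)
  obtain h where h: "fin_chain (carrier G \<times> carrier G \<times> carrier G) h"
    and cyc: "\<And>q. formal_sum2 m c x y q - hopf_cycle G g a b q = bd3 G h q"
    using assms(9) unfolding homologous2_def by blast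
  define S where "S = hopf_elements G g a b \<union> chain3_elements G h"
  define \<delta> :: real where "\<delta> = 1 / (24 * real g + 8)"
  have S: "finite S" "S \<subseteq> carrier G"
    using h hopf_elements_subset chain3_elements_subset
    unfolding S_def fin_chain_def by (auto simp: finite_hopf_elements finite_chain3_elements)
  have "(1 + \<delta>) ^ (6 * g) \<le> 4/3"
    unfolding \<delta>_def by (rule one_plus_pow_le_four_thirds) (auto simp: field_simps)
  then have \<delta>: "0 < \<delta>" "\<delta> \<le> 1/3" "(1 + \<delta>) ^ (6 * g) \<le> 4/3"
    unfolding \<delta>_def by (auto simp: field_simps)
  show ?thesis
  proof (intro exI conjI allI impI)
    fix k \<rho> assume "Sdelta_rep G S \<delta> k \<rho>"
    then interpret hopf_rep G k \<rho> S \<delta> g a b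
      using S \<delta> unfolding Sdelta_rep_def by unfold_locales (auto simp: S_def)
    show "(1 / (2 * pi * \<i>)) * mtrace (mlog (mcomm_prod k \<rho> a b g)) =
        (1 / (2 * pi * \<i>)) * (\<Sum>j<m. of_int (c j) *
           mtrace (mlog (\<rho> (x j) * \<rho> (y j) * madj (\<rho> (x j \<otimes>\<^bsub>G\<^esub> y j)))))"
      using mtrace_mlog_mcomm_prod_eq_pairing[OF assms(5) cyc] h
      unfolding omega_def defect_def fin_chain_def S_def by simp
  qed (use S \<delta> in auto)
qed
end
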